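(* Assume that (H1)-(H2) hold, $\widetilde{\mathcal{L}}$ is compact and $k_{w}(x, \cdot) \in L^2(pw)$ for some $x\in ]a,b[$. For all $g_0\in E^2(p,w)$ such that $\mathbb{E}_p[g_0 e_1w]\neq 0$, we have $$\lim_{n\rightarrow \infty}\left(\frac{\widetilde{\mathcal{L}} ^{n+1}g_0}{\widetilde{\mathcal{L}} ^ng_0}\right)(x)=C(p,w).$$
   Context: Let $-\infty\le a<b\le\infty$, $p$ a probability density on $]a,b[$ with $p>0$ a.e., $w\in L^1_{\text{loc}}(]a,b[)$ a weight with $w>0$ a.e. and $pw\in L^1_{\text{loc}}$. Let $P(x)=\int_a^x p$, $\bar P=1-P$, $K(x,y)=P(x\wedge y)\bar P(x\vee y)$, $k(x,y)=K(x,y)/(p(x)p(y))$, $k_w(x,y)=k(x,y)/(w(x)w(y))$. $C(p,w)$ is the smallest $C$ with $\mathrm{Var}_p[h]\le C\,\mathbb{E}_p[|h'|^2w]$ for all weakly differentiable $h\in L^2(p)$ with $h'\in L^2(pw)$. Hypotheses: (H1) $C(p,w)<\infty$; (H2) $L^2(pw)\subset L^1_{\text{loc}}(]a,b[)$. $E^2(p,w)=\{f\in L^2(pw)\cap L^1_{\text{loc}}: x\mapsto\int_{x_0}^x f\in L^2(p)\}$ with $L^2(pw)$ norm. The operator $\widetilde{\mathcal{L}} f(x)=\frac{1}{p(x)w(x)}\int_a^b K(x,y)f(y)\,dy$, iterates $\widetilde{\mathcal{L}}^{n+1}=\widetilde{\mathcal{L}}(\widetilde{\mathcal{L}}^n)$;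 pointwise values at $x$ are understood via $\int_a^bK(x,\cdot)f$, which makes sense when $k_w(x,\cdot)\in L^2(pw)$. When compact, $\widetilde{\mathcal{L}}$ has largest eigenvalue $\kappa_1=C(p,w)$ with a.e. positive eigenvector $e_1$ (part of an orthonormal eigenbasis of $E^2(p,w)$). *)

theory Defs
  imports "HOL-Analysis.Analysis"
begin

definition Ioi :: "ereal \<Rightarrow> ereal \<Rightarrow> real set" where
  "Ioi a b = {x. a < ereal x \<and> ereal x < b}"

definition loc_int :: "ereal \<Rightarrow> ereal \<Rightarrow> (real \<Rightarrow> real) \<Rightarrow> bool" where
  "loc_int a b f \<longleftrightarrow> (\<forall>c d. a < ereal c \<and> ereal d < b \<longrightarrow> set_integrable lborel {c..d} f)"

definition prob_density :: "ereal \<Rightarrow> ereal \<Rightarrow> (real \<Rightarrow> real) \<Rightarrow> bool" where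
  "prob_density a b p \<longleftrightarrow> p \<in> borel_measurable borel \<and>
     set_integrable lborel (Ioi a b) p \<and> (LINT y:Ioi a b|lborel. p y) = 1 \<and>
     (AE y in lborel. y \<in> Ioi a b \<longrightarrow> p y > 0)"

definition weight :: "ereal \<Rightarrow> ereal \<Rightarrow> (real \<Rightarrow> real) \<Rightarrow> (real \<Rightarrow> real) \<Rightarrow> bool" where
  "weight a b p w \<longleftrightarrow> w \<in> borel_measurable borel \<and> loc_int a b w \<and>
     (AE y in lborel. y \<in> Ioi a b \<longrightarrow> w y > 0) \<and> loc_int a b (\<lambda>y. p y * w y)"

definition cdf :: "ereal \<Rightarrow> ereal \<Rightarrow> (real \<Rightarrow> real) \<Rightarrow> real \<Rightarrow> real" where
  "cdf a b p x = (LINT y:{y \<in> Ioi a b. y \<le> x}|lborel. p y)"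

definition Kker :: "ereal \<Rightarrow> ereal \<Rightarrow> (real \<Rightarrow> real) \<Rightarrow> real \<Rightarrow> real \<Rightarrow> real" where
  "Kker a b p x y = cdf a b p (min x y) * (1 - cdf a b p (max x y))"

definition kker :: "ereal \<Rightarrow> ereal \<Rightarrow> (real \<Rightarrow> real) \<Rightarrow> real \<Rightarrow> real \<Rightarrow> real" where
  "kker a b p x y = Kker a b p x y / (p x * p y)"

definition kw :: "ereal \<Rightarrow> ereal \<Rightarrow> (real \<Rightarrow> real) \<Rightarrow> (real \<Rightarrow> real) \<Rightarrow> real \<Rightarrow> real \<Rightarrow> real" where
  "kw a b p w x y = kker a b p x y / (w x * w y)"

definition L2 :: "ereal \<Rightarrow> ereal \<Rightarrow> (real \<Rightarrow> real) \<Rightarrow> (real \<Rightarrow> real) \<Rightarrow> bool" where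
  "L2 a b q f \<longleftrightarrow> f \<in> borel_measurable borel \<and>
     set_integrable lborel (Ioi a b) (\<lambda>y. (f y)\<^sup>2 * q y)"

definition test_fun :: "ereal \<Rightarrow> ereal \<Rightarrow> (real \<Rightarrow> real) \<Rightarrow> bool" where
  "test_fun a b \<phi> \<longleftrightarrow> (\<forall>n x. ((deriv ^^ n) \<phi>) differentiable (at x)) \<and>
     (\<exists>c d. a < ereal c \<and> ereal d < b \<and> (\<forall>y. y \<notin> {c..d} \<longrightarrow> \<phi> y = 0))"

definition weak_deriv :: "ereal \<Rightarrow> ereal \<Rightarrow> (real \<Rightarrow> real) \<Rightarrow> (real \<Rightarrow> real) \<Rightarrow> bool" where
  "weak_deriv a b h h' \<longleftrightarrow> h \<in> borel_measurable borel \<and> h' \<in> borel_measurable borel \<and>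
     loc_int a b h \<and> loc_int a b h' \<and>
     (\<forall>\<phi>. test_fun a b \<phi> \<longrightarrow>
        (LINT y:Ioi a b|lborel. h y * deriv \<phi> y) = - (LINT y:Ioi a b|lborel. h' y * \<phi> y))"

definition variance_p :: "ereal \<Rightarrow> ereal \<Rightarrow> (real \<Rightarrow> real) \<Rightarrow> (real \<Rightarrow> real) \<Rightarrow> real" where
  "variance_p a b p h = (LINT y:Ioi a b|lborel. (h y)\<^sup>2 * p y) - (LINT y:Ioi a b|lborel. h y * p y)\<^sup>2"

definition energy :: "ereal \<Rightarrow> ereal \<Rightarrow> (real \<Rightarrow> real) \<Rightarrow> (real \<Rightarrow> real) \<Rightarrow> (real \<Rightarrow> real) \<Rightarrow> real" where
  "energy a b p w h' = (LINT y:Ioi a b|lborel. \<bar>h' y\<bar>\<^sup>2 * w y * p y)"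

definition poincare_consts :: "ereal \<Rightarrow> ereal \<Rightarrow> (real \<Rightarrow> real) \<Rightarrow> (real \<Rightarrow> real) \<Rightarrow> real set" where
  "poincare_consts a b p w = {C. C \<ge> 0 \<and> (\<forall>h h'. L2 a b p h \<and> weak_deriv a b h h' \<and>
       L2 a b (\<lambda>y. p y * w y) h' \<longrightarrow> variance_p a b p h \<le> C * energy a b p w h')}"

definition Cpw :: "ereal \<Rightarrow> ereal \<Rightarrow> (real \<Rightarrow> real) \<Rightarrow> (real \<Rightarrow> real) \<Rightarrow> real" where
  "Cpw a b p w = Inf (poincare_consts a b p w)"

definition H1 :: "ereal \<Rightarrow> ereal \<Rightarrow> (real \<Rightarrow> real) \<Rightarrow> (real \<Rightarrow> real) \<Rightarrow> bool" where
  "H1 a b p w \<longleftrightarrow> poincare_consts a b p w \<noteq> {}"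

definition H2 :: "ereal \<Rightarrow> ereal \<Rightarrow> (real \<Rightarrow> real) \<Rightarrow> (real \<Rightarrow> real) \<Rightarrow> bool" where
  "H2 a b p w \<longleftrightarrow> (\<forall>f. L2 a b (\<lambda>y. p y * w y) f \<longrightarrow> loc_int a b f)"

text \<open>The space E^2(p,w) (as a set of representatives).\<close>
definition E2 :: "ereal \<Rightarrow> ereal \<Rightarrow> (real \<Rightarrow> real) \<Rightarrow> (real \<Rightarrow> real) \<Rightarrow> (real \<Rightarrow> real) set" where
  "E2 a b p w = {f. L2 a b (\<lambda>y. p y * w y) f \<and> loc_int a b f \<and>
      (\<exists>x0 \<in> Ioi a b. L2 a b p (\<lambda>x. LBINT y=ereal x0..ereal x. f y))}"

definition normsq :: "ereal \<Rightarrow> ereal \<Rightarrow> (real \<Rightarrow> real) \<Rightarrow> (real \<Rightarrow> real) \<Rightarrow> (real \<Rightarrow> real) \<Rightarrow> real" where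
  "normsq a b p w f = (LINT y:Ioi a b|lborel. (f y)\<^sup>2 * p y * w y)"

definition Lt :: "ereal \<Rightarrow> ereal \<Rightarrow> (real \<Rightarrow> real) \<Rightarrow> (real \<Rightarrow> real) \<Rightarrow> (real \<Rightarrow> real) \<Rightarrow> real \<Rightarrow> real" where
  "Lt a b p w f = (\<lambda>x. 1 / (p x * w x) * (LINT y:Ioi a b|lborel. Kker a b p x y * f y))"

definition Lt_compact :: "ereal \<Rightarrow> ereal \<Rightarrow> (real \<Rightarrow> real) \<Rightarrow> (real \<Rightarrow> real) \<Rightarrow> bool" where
  "Lt_compact a b p w \<longleftrightarrow>
     (\<forall>f \<in> E2 a b p w. Lt a b p w f \<in> E2 a b p w) \<and>
     (\<forall>F :: nat \<Rightarrow> real \<Rightarrow> real. (\<forall>n. F n \<in> E2 a b p w) \<and> (\<exists>B. \<forall>n. normsq a b p w (F n) \<le> B) \<longrightarrow>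
        (\<exists>(r :: nat \<Rightarrow> nat) g. strict_mono r \<and> g \<in> E2 a b p w \<and>
           (\<lambda>n. normsq a b p w (\<lambda>y. Lt a b p w (F (r n)) y - g y)) \<longlonglongrightarrow> 0))"

end

theory Submission
  imports Defs
begin

(*
  By the Schur test with the positive eigenfunction e1, the operator T = L-tilde is bounded by
  kappa on L^2(pw), and it is self-adjoint there because K is symmetric.  A Perron-Frobenius
  argument shows that no eigenfunction for kappa or -kappa is orthogonal to e1: equality
  |T g| = T |g| forces g to have constant sign, and a function of constant sign orthogonal to the
  positive e1 vanishes.  Together with compactness this yields a spectral gap: on the
  orthogonal complement of e1, |T f|^2 <= M |f|^2 with M < kappa^2.  Hence
  T^n g0 = c kappa^n e1 + r_n with c = <g0, e1> and |r_n|^2 <= M^n |r_0|^2.  Since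
  (T f)(x) = <k_w(x,.), f> and <k_w(x,.), e1> > 0, this gives
  (T^(n+1) g0)(x) / kappa^n --> c <k_w(x,.), e1> <> 0, so consecutive ratios tend to kappa.
*)

lemma Ioi_eq_einterval: "Ioi a b = einterval a b"
  unfolding Ioi_def einterval_def by simp

lemma Ioi_sets[measurable]: "Ioi a b \<in> sets borel"
  unfolding Ioi_eq_einterval by simp

lemma emeasure_einterval_pos:
  fixes a b :: ereal
  assumes "a < b"
  shows "emeasure lborel (einterval a b) > 0"
proof -
  obtain c d where cd: "a < ereal c" "c < d" "ereal d < b"
    using ereal_dense2[OF assms] by (metis ereal_dense2 less_ereal.simps(1))
  have "{c<..<d} \<subseteq> einterval a b"
    using cd by (auto simp: einterval_def) (meson less_ereal.simps(1) less_trans)+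
  then have "emeasure lborel {c<..<d} \<le> emeasure lborel (einterval a b)"
    by (intro emeasure_mono) auto
  moreover have "0 < emeasure lborel {c<..<d}" using cd by simp
  ultimately show ?thesis by (rule order_less_le_trans[rotated])
qed

lemma AE_ex_in_pos_measure:
  assumes "AE y in M. y \<in> A \<longrightarrow> P y" and "emeasure M A > 0" and "A \<in> sets M"
  shows "\<exists>y\<in>A. P y"
proof (rule ccontr)
  assume none: "\<not> ?thesis"
  have "AE y in M. y \<notin> A"
    by (rule AE_mp[OF assms(1) AE_I2]) (use none in auto)
  then have "A \<in> null_sets M" using AE_iff_null_sets[OF assms(3)] by simp
  with assms(2) show False by (simp add: null_sets_def)
qed

lemma set_lebesgue_integral_real:
  "set_lebesgue_integral M A (f :: _ \<Rightarrow> real) = integral\<^sup>L M (\<lambda>y. indicator A y * f y)"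
  unfolding set_lebesgue_integral_def by simp

lemma set_integrable_real:
  "set_integrable M A (f :: _ \<Rightarrow> real) \<longleftrightarrow> integrable M (\<lambda>y. indicator A y * f y)"
  unfolding set_integrable_def by simp

lemma integral_indicator_pos_AE:
  fixes f :: "'a \<Rightarrow> real"
  assumes A: "A \<in> sets M" "emeasure M A > 0"
    and int: "integrable M (\<lambda>y. indicator A y * f y)"
    and pos: "AE y in M. y \<in> A \<longrightarrow> f y > 0"
  shows "integral\<^sup>L M (\<lambda>y. indicator A y * f y) > 0"
proof -
  have nn: "AE y in M. 0 \<le> indicator A y * f y"
    using pos by eventually_elim (auto simp: indicator_def)
  have "integral\<^sup>L M (\<lambda>y. indicator A y * f y) \<noteq> 0"
  proof
    assume "integral\<^sup>L M (\<lambda>y. indicator A y * f y) = 0"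
    then have "AE y in M. indicator A y * f y = 0"
      using integral_nonneg_eq_0_iff_AE[OF int nn] by simp
    then have "AE y in M. y \<in> A \<longrightarrow> False"
      using pos by eventually_elim (auto simp: indicator_def)
    from AE_ex_in_pos_measure[OF this A(2) A(1)] show False by simp
  qed
  moreover have "integral\<^sup>L M (\<lambda>y. indicator A y * f y) \<ge> 0"
    using nn by (rule integral_nonneg_AE)
  ultimately show ?thesis by linarith
qed

lemma abs_mult_le_sq_add_sq:
  fixes u v q :: real
  assumes "0 \<le> q"
  shows "\<bar>u * v * q\<bar> \<le> u\<^sup>2 * q + v\<^sup>2 * q"
proof -
  have "2 * \<bar>u * v\<bar> \<le> u\<^sup>2 + v\<^sup>2"
    using sum_squares_bound[of "\<bar>u\<bar>" "\<bar>v\<bar>"] by (simp add: abs_mult)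
  then have "\<bar>u * v\<bar> * q \<le> (u\<^sup>2 + v\<^sup>2) * q"
    using assms by (intro mult_right_mono) auto
  then show ?thesis using assms by (simp add: abs_mult algebra_simps)
qed

lemma L2_meas: "L2 a b r f \<Longrightarrow> f \<in> borel_measurable borel"
  unfolding L2_def by simp

lemma L2_integrable_mult:
  assumes f: "L2 a b r f" and g: "L2 a b r g"
    and r: "AE y in lborel. y \<in> Ioi a b \<longrightarrow> 0 \<le> r y" and [measurable]: "r \<in> borel_measurable borel"
  shows "integrable lborel (\<lambda>y. indicator (Ioi a b) y * (f y * g y * r y))"
proof (rule Bochner_Integration.integrable_bound)
  show "integrable lborel (\<lambda>y. indicator (Ioi a b) y * ((f y)\<^sup>2 * r y) + indicator (Ioi a b) y * ((g y)\<^sup>2 * r y))"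
    using f g unfolding L2_def set_integrable_real by auto
  have [measurable]: "f \<in> borel_measurable borel" "g \<in> borel_measurable borel"
    using f g by (auto dest: L2_meas)
  show "(\<lambda>y. indicator (Ioi a b) y * (f y * g y * r y)) \<in> borel_measurable lborel"
    by measurable
  show "AE y in lborel. norm (indicator (Ioi a b) y * (f y * g y * r y))
      \<le> norm (indicator (Ioi a b) y * ((f y)\<^sup>2 * r y) + indicator (Ioi a b) y * ((g y)\<^sup>2 * r y))"
    using r by eventually_elim (use abs_mult_le_sq_add_sq in \<open>auto simp: indicator_def\<close>)
qed

lemma L2_add_scaled:
  assumes f: "L2 a b r f" and g: "L2 a b r g"
    and r: "AE y in lborel. y \<in> Ioi a b \<longrightarrow> 0 \<le> r y" and [measurable]: "r \<in> borel_measurable borel"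
  shows "L2 a b r (\<lambda>y. f y + c * g y)"
proof -
  have [measurable]: "f \<in> borel_measurable borel" "g \<in> borel_measurable borel"
    using f g by (auto dest: L2_meas)
  let ?i = "indicator (Ioi a b)"
  have "(\<lambda>y. ?i y * ((f y + c * g y)\<^sup>2 * r y)) =
     (\<lambda>y. ?i y * (f y * f y * r y) + 2 * c * (?i y * (f y * g y * r y)) + c\<^sup>2 * (?i y * (g y * g y * r y)))"
    by (auto simp: fun_eq_iff power2_eq_square algebra_simps)
  moreover have "integrable lborel \<dots>"
    using L2_integrable_mult[OF f f r] L2_integrable_mult[OF f g r] L2_integrable_mult[OF g g r] by auto
  ultimately show ?thesis unfolding L2_def set_integrable_real by auto
qed

lemma L2_cong:
  assumes "L2 a b r g" "f \<in> borel_measurable borel" "\<And>y. y \<in> Ioi a b \<Longrightarrow> f y = g y"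
  shows "L2 a b r f"
proof -
  have "(\<lambda>y. indicator (Ioi a b) y * ((f y)\<^sup>2 * r y)) = (\<lambda>y. indicator (Ioi a b) y * ((g y)\<^sup>2 * r y))"
    using assms(3) by (auto simp: fun_eq_iff indicator_def)
  then show ?thesis using assms(1,2) unfolding L2_def set_integrable_real by simp
qed

lemma borel_measurable_interval_integral_upper:
  fixes h :: "real \<Rightarrow> real"
  assumes [measurable]: "h \<in> borel_measurable borel"
  shows "(\<lambda>x. LBINT y=ereal x1..ereal x. h y) \<in> borel_measurable borel"
proof -
  have "(LBINT y=ereal x1..ereal x. h y) =
    (if x1 \<le> x then integral\<^sup>L lborel (\<lambda>y. if x1 < y \<and> y < x then h y else 0)
     else - integral\<^sup>L lborel (\<lambda>y. if x < y \<and> y < x1 then h y else 0))" for x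
    unfolding interval_lebesgue_integral_def
    by (auto simp: set_lebesgue_integral_real fun_eq_iff indicator_def intro!: arg_cong[where f="integral\<^sup>L lborel"])
  moreover have [measurable]: "h \<in> borel_measurable lborel" by simp
  ultimately show ?thesis by simp
qed

lemma LIMSEQ_zero_if_sq_le:
  fixes u e :: "nat \<Rightarrow> real"
  assumes "\<And>n. (u n)\<^sup>2 \<le> C * e n" and "e \<longlonglongrightarrow> 0" and "0 \<le> C"
  shows "u \<longlonglongrightarrow> 0"
proof (rule Lim_null_comparison)
  show "(\<lambda>n. sqrt (C * e n)) \<longlonglongrightarrow> 0"
    using tendsto_real_sqrt[OF tendsto_mult[OF tendsto_const assms(2)]] by simp
  show "\<forall>\<^sub>F n in sequentially. norm (u n) \<le> sqrt (C * e n)"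
    using assms(1) by (simp add: real_le_rsqrt)
qed

lemma LIMSEQ_ratio_if_geometric:
  fixes u :: "nat \<Rightarrow> real"
  assumes "(\<lambda>n. u n / \<kappa> ^ n) \<longlonglongrightarrow> L" and "L \<noteq> 0" and "\<kappa> \<noteq> 0"
  shows "(\<lambda>n. u (Suc n) / u n) \<longlonglongrightarrow> \<kappa>"
proof -
  have "(\<lambda>n. \<kappa> * (u (Suc n) / \<kappa> ^ Suc n) / (u n / \<kappa> ^ n)) \<longlonglongrightarrow> \<kappa> * L / L"
    using assms by (intro tendsto_intros LIMSEQ_Suc) auto
  moreover have "(\<lambda>n. \<kappa> * (u (Suc n) / \<kappa> ^ Suc n) / (u n / \<kappa> ^ n)) = (\<lambda>n. u (Suc n) / u n)"
    using assms(3) by (simp add: fun_eq_iff)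
  ultimately show ?thesis using assms(2) by simp
qed

lemma nn_integral_Cauchy_Schwarz_weighted:
  fixes k e f :: "'a \<Rightarrow> real"
  assumes [measurable]: "k \<in> borel_measurable M" "e \<in> borel_measurable M" "f \<in> borel_measurable M"
    and pos: "AE z in M. 0 \<le> k z \<and> (k z = 0 \<or> 0 < e z)"
  shows "(\<integral>\<^sup>+z. ennreal (k z * \<bar>f z\<bar>) \<partial>M)\<^sup>2
    \<le> (\<integral>\<^sup>+z. ennreal (k z * e z) \<partial>M) * (\<integral>\<^sup>+z. ennreal (k z * (f z)\<^sup>2 / e z) \<partial>M)"
proof -
  define F where "F z = ennreal (sqrt (k z * e z))" for z
  define G where "G z = ennreal (sqrt (k z / e z) * \<bar>f z\<bar>)" for z
  have [measurable]: "F \<in> borel_measurable M" "G \<in> borel_measurable M"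
    unfolding F_def[abs_def] G_def[abs_def] by measurable
  have pointwise: "F z * G z = ennreal (k z * \<bar>f z\<bar>) \<and> F z ^ 2 = ennreal (k z * e z)
      \<and> G z ^ 2 = ennreal (k z * (f z)\<^sup>2 / e z)"
    if k: "0 \<le> k z" and "k z = 0 \<or> 0 < e z" for z
  proof (cases "k z = 0")
    case False
    with that have e: "0 < e z" by auto
    have "k z * e z * (k z / e z) = (k z)\<^sup>2" using e by (simp add: power2_eq_square)
    then have "sqrt (k z * e z) * sqrt (k z / e z) = k z" using k by (simp add: real_sqrt_mult[symmetric])
    then have "F z * G z = ennreal (k z * \<bar>f z\<bar>)"
      unfolding F_def G_def using k e by (simp add: ennreal_mult'[symmetric] mult.assoc[symmetric])
    moreover have "F z ^ 2 = ennreal (k z * e z)"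
      unfolding F_def using k e by (simp add: ennreal_power)
    moreover have "G z ^ 2 = ennreal (k z * (f z)\<^sup>2 / e z)"
      unfolding G_def using k e by (simp add: ennreal_power power_mult_distrib)
    ultimately show ?thesis by simp
  qed (simp add: F_def G_def)
  have "AE z in M. F z * G z = ennreal (k z * \<bar>f z\<bar>) \<and> F z ^ 2 = ennreal (k z * e z)
      \<and> G z ^ 2 = ennreal (k z * (f z)\<^sup>2 / e z)"
    using pos by eventually_elim (elim conjE, rule pointwise)
  then have "(\<integral>\<^sup>+z. F z * G z \<partial>M) = (\<integral>\<^sup>+z. ennreal (k z * \<bar>f z\<bar>) \<partial>M)"
    and "(\<integral>\<^sup>+z. F z ^ 2 \<partial>M) = (\<integral>\<^sup>+z. ennreal (k z * e z) \<partial>M)"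
    and "(\<integral>\<^sup>+z. G z ^ 2 \<partial>M) = (\<integral>\<^sup>+z. ennreal (k z * (f z)\<^sup>2 / e z) \<partial>M)"
    by (auto intro!: nn_integral_cong_AE)
  moreover have "(\<integral>\<^sup>+z. F z * G z \<partial>M)\<^sup>2 \<le> (\<integral>\<^sup>+z. F z ^ 2 \<partial>M) * (\<integral>\<^sup>+z. G z ^ 2 \<partial>M)"
    by (rule Cauchy_Schwarz_nn_integral) auto
  ultimately show ?thesis by simp
qed

locale density_on =
  fixes a b :: ereal and p :: "real \<Rightarrow> real"
  assumes a_less_b: "a < b" and density: "prob_density a b p"
begin

abbreviation "I \<equiv> Ioi a b"
abbreviation "P \<equiv> cdf a b p"
abbreviation "K \<equiv> Kker a b p"

lemma p_measurable[measurable]: "p \<in> borel_measurable borel"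
  using density unfolding prob_density_def by auto

lemma integrable_p: "integrable lborel (\<lambda>y. indicator I y * p y)"
  using density unfolding prob_density_def set_integrable_real by auto

lemma integral_p: "integral\<^sup>L lborel (\<lambda>y. indicator I y * p y) = 1"
  using density unfolding prob_density_def set_lebesgue_integral_real by auto

lemma AE_p_pos: "AE y in lborel. y \<in> I \<longrightarrow> p y > 0"
  using density unfolding prob_density_def by auto

lemma emeasure_I_pos: "emeasure lborel I > 0"
  unfolding Ioi_eq_einterval using emeasure_einterval_pos[OF a_less_b] .

lemma integrable_p_restrict:
  "B \<in> sets borel \<Longrightarrow> integrable lborel (\<lambda>y. indicator B y * (indicator I y * p y))"
  using integrable_mult_indicator[OF _ integrable_p, of B] by simp

lemma integral_p_restrict_nonneg: "0 \<le> integral\<^sup>L lborel (\<lambda>y. indicator B y * (indicator I y * p y))"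
  by (rule integral_nonneg_AE) (use AE_p_pos in \<open>eventually_elim, auto simp: indicator_def\<close>)

lemma integral_p_restrict_pos:
  assumes "c < d" "einterval c d \<subseteq> I \<inter> B" "B \<in> sets borel"
  shows "integral\<^sup>L lborel (\<lambda>y. indicator B y * (indicator I y * p y)) > 0"
proof -
  have "emeasure lborel (einterval c d) \<le> emeasure lborel (I \<inter> B)"
    using assms by (intro emeasure_mono) auto
  then have "emeasure lborel (I \<inter> B) > 0"
    using emeasure_einterval_pos[OF assms(1)] by auto
  moreover have "integrable lborel (\<lambda>y. indicator (I \<inter> B) y * p y)"
    using integrable_p_restrict[OF assms(3)] by (simp add: indicator_inter_arith ac_simps)
  moreover have "AE y in lborel. y \<in> I \<inter> B \<longrightarrow> p y > 0"
    using AE_p_pos by eventually_elim auto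
  ultimately have "integral\<^sup>L lborel (\<lambda>y. indicator (I \<inter> B) y * p y) > 0"
    using assms by (intro integral_indicator_pos_AE) auto
  then show ?thesis by (simp add: indicator_inter_arith ac_simps)
qed

lemma cdf_eq_integral: "P x = integral\<^sup>L lborel (\<lambda>y. indicator {..x} y * (indicator I y * p y))"
  unfolding cdf_def set_lebesgue_integral_real
  by (intro arg_cong[where f="integral\<^sup>L lborel"]) (auto simp: indicator_def fun_eq_iff)

lemma cdf_add_tail: "P x + integral\<^sup>L lborel (\<lambda>y. indicator {x<..} y * (indicator I y * p y)) = 1"
proof -
  have "P x + integral\<^sup>L lborel (\<lambda>y. indicator {x<..} y * (indicator I y * p y)) =
      integral\<^sup>L lborel (\<lambda>y. indicator {..x} y * (indicator I y * p y) + indicator {x<..} y * (indicator I y * p y))"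
    unfolding cdf_eq_integral
    by (rule Bochner_Integration.integral_add[symmetric]) (auto intro: integrable_p_restrict)
  also have "\<dots> = integral\<^sup>L lborel (\<lambda>y. indicator I y * p y)"
    by (intro arg_cong[where f="integral\<^sup>L lborel"]) (auto simp: indicator_def fun_eq_iff)
  finally show ?thesis using integral_p by simp
qed

lemma cdf_nonneg: "0 \<le> P x"
  unfolding cdf_eq_integral by (rule integral_p_restrict_nonneg)

lemma cdf_le_1: "P x \<le> 1"
  using cdf_add_tail[of x] integral_p_restrict_nonneg[of "{x<..}"] by linarith

lemma cdf_mono: "mono P"
proof
  fix x x' :: real
  assume "x \<le> x'"
  show "P x \<le> P x'"
    unfolding cdf_eq_integral
  proof (rule integral_mono_AE[OF integrable_p_restrict integrable_p_restrict])
    show "AE y in lborel. indicator {..x} y * (indicator I y * p y) \<le> indicator {..x'} y * (indicator I y * p y)"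
      using AE_p_pos by eventually_elim (use \<open>x \<le> x'\<close> in \<open>auto simp: indicator_def\<close>)
  qed auto
qed

lemma cdf_measurable[measurable]: "P \<in> borel_measurable borel"
  using borel_measurable_mono[OF cdf_mono] .

lemma cdf_pos: assumes "x \<in> I" shows "P x > 0"
proof -
  have "einterval a (ereal x) \<subseteq> I \<inter> {..x}"
    using assms by (auto simp: Ioi_def einterval_def) (meson less_ereal.simps(1) less_trans)
  then show ?thesis
    unfolding cdf_eq_integral using assms by (intro integral_p_restrict_pos) (auto simp: Ioi_def)
qed

lemma cdf_less_1: assumes "x \<in> I" shows "P x < 1"
proof -
  have "einterval (ereal x) b \<subseteq> I \<inter> {x<..}"
    using assms by (auto simp: Ioi_def einterval_def) (meson less_ereal.simps(1) less_trans)
  then have "integral\<^sup>L lborel (\<lambda>y. indicator {x<..} y * (indicator I y * p y)) > 0"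
    using assms by (intro integral_p_restrict_pos) (auto simp: Ioi_def)
  then show ?thesis using cdf_add_tail[of x] by linarith
qed

lemma Kker_nonneg: "0 \<le> K y z"
  unfolding Kker_def using cdf_nonneg cdf_le_1 by simp

lemma Kker_sym: "K y z = K z y"
  unfolding Kker_def by (simp add: min.commute max.commute)

lemma Kker_pos: "y \<in> I \<Longrightarrow> z \<in> I \<Longrightarrow> 0 < K y z"
  unfolding Kker_def using cdf_pos cdf_less_1 by (cases "y \<le> z") (auto simp: min_def max_def)

lemma Kker_measurable[measurable]: "(\<lambda>(y, z). K y z) \<in> borel_measurable (lborel \<Otimes>\<^sub>M lborel)"
  unfolding Kker_def by measurable

lemma Kker_measurable_right[measurable]: "K y \<in> borel_measurable borel"
  unfolding Kker_def by measurable

lemma Kker_le_diag: "K y z \<le> P z * (1 - P z)"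
  unfolding Kker_def using cdf_nonneg cdf_le_1
  by (intro mult_mono) (auto intro!: monoD[OF cdf_mono])

lemma diag_mult_diag_le_Kker: "P z * (1 - P z) * (P x * (1 - P x)) \<le> K x z"
proof -
  have "P z * (1 - P z) * (P x * (1 - P x)) = K x z * (P (max x z) * (1 - P (min x z)))"
    by (cases "x \<le> z") (simp_all add: Kker_def min_def max_def ac_simps)
  also have "\<dots> \<le> K x z * 1"
    using cdf_nonneg cdf_le_1 by (intro mult_left_mono mult_le_one Kker_nonneg) auto
  finally show ?thesis by simp
qed

lemma Kker_le_Kker_at:
  assumes "x \<in> I"
  shows "K y z \<le> K x z / (P x * (1 - P x))"
proof -
  have pos: "P x * (1 - P x) > 0" using cdf_pos[OF assms] cdf_less_1[OF assms] by simp
  have "K y z * (P x * (1 - P x)) \<le> P z * (1 - P z) * (P x * (1 - P x))"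
    using pos by (intro mult_right_mono Kker_le_diag) auto
  also have "\<dots> \<le> K x z" by (rule diag_mult_diag_le_Kker)
  finally show ?thesis using pos by (simp add: pos_le_divide_eq)
qed

end

locale weighted_density = density_on +
  fixes w :: "real \<Rightarrow> real"
  assumes weight: "weight a b p w"
begin

abbreviation "q y \<equiv> p y * w y"
abbreviation "L2q \<equiv> L2 a b (\<lambda>y. p y * w y)"

definition inner_pw :: "(real \<Rightarrow> real) \<Rightarrow> (real \<Rightarrow> real) \<Rightarrow> real" where
  "inner_pw f g = integral\<^sup>L lborel (\<lambda>y. indicator I y * (f y * g y * q y))"

abbreviation nsq :: "(real \<Rightarrow> real) \<Rightarrow> real" where
  "nsq f \<equiv> inner_pw f f"

lemma w_measurable[measurable]: "w \<in> borel_measurable borel"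
  using weight unfolding weight_def by auto

lemma AE_q_pos: "AE y in lborel. y \<in> I \<longrightarrow> q y > 0"
proof -
  have "AE y in lborel. y \<in> I \<longrightarrow> w y > 0" using weight unfolding weight_def by auto
  with AE_p_pos show ?thesis by eventually_elim simp
qed

lemma AE_q_nonneg: "AE y in lborel. y \<in> I \<longrightarrow> 0 \<le> q y"
  using AE_q_pos by eventually_elim auto

lemma L2q_iff: "L2q f \<longleftrightarrow> f \<in> borel_measurable borel \<and> integrable lborel (\<lambda>y. indicator I y * ((f y)\<^sup>2 * q y))"
  unfolding L2_def set_integrable_real ..

lemma L2q_integrable_mult: "L2q f \<Longrightarrow> L2q g \<Longrightarrow> integrable lborel (\<lambda>y. indicator I y * (f y * g y * q y))"
  using L2_integrable_mult[OF _ _ AE_q_nonneg] by simp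

lemma L2q_add_scaled: "L2q f \<Longrightarrow> L2q g \<Longrightarrow> L2q (\<lambda>y. f y + c * g y)"
  using L2_add_scaled[OF _ _ AE_q_nonneg] by simp

lemma L2q_zero: "L2q (\<lambda>_. 0)"
  unfolding L2q_iff by simp

lemma L2q_scale: "L2q f \<Longrightarrow> L2q (\<lambda>y. c * f y)"
  using L2q_add_scaled[OF L2q_zero] by simp

lemma L2q_abs: assumes "L2q f" shows "L2q (\<lambda>y. \<bar>f y\<bar>)"
proof -
  have [measurable]: "f \<in> borel_measurable borel" using L2_meas[OF assms] .
  show ?thesis using assms unfolding L2q_iff by simp
qed

lemma normsq_eq_nsq: "normsq a b p w f = nsq f"
  unfolding normsq_def inner_pw_def set_lebesgue_integral_real by (simp add: power2_eq_square ac_simps)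

lemma inner_pw_sym: "inner_pw f g = inner_pw g f"
  unfolding inner_pw_def by (simp add: ac_simps)

lemma inner_pw_scale: "inner_pw (\<lambda>y. c * f y) g = c * inner_pw f g"
  unfolding inner_pw_def by (simp add: ac_simps)

lemma inner_pw_add_scaled:
  assumes "L2q f" "L2q g" "L2q h"
  shows "inner_pw (\<lambda>y. f y + c * g y) h = inner_pw f h + c * inner_pw g h"
proof -
  have "inner_pw (\<lambda>y. f y + c * g y) h =
      integral\<^sup>L lborel (\<lambda>y. indicator I y * (f y * h y * q y) + c * (indicator I y * (g y * h y * q y)))"
    unfolding inner_pw_def by (simp add: algebra_simps)
  also have "\<dots> = inner_pw f h + c * inner_pw g h"
    unfolding inner_pw_def using L2q_integrable_mult[OF assms(1,3)] L2q_integrable_mult[OF assms(2,3)] by simp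
  finally show ?thesis .
qed

lemma nsq_nonneg: "0 \<le> nsq f"
  unfolding inner_pw_def
  by (rule integral_nonneg_AE) (use AE_q_nonneg in \<open>eventually_elim, auto simp: indicator_def\<close>)

lemma nsq_eq_integral: "nsq f = integral\<^sup>L lborel (\<lambda>z. indicator I z * ((f z)\<^sup>2 * q z))"
  unfolding inner_pw_def by (simp add: power2_eq_square ac_simps)

lemma nn_integral_sq_eq_nsq:
  assumes f: "L2q f"
  shows "(\<integral>\<^sup>+z. ennreal (indicator I z * ((f z)\<^sup>2 * q z)) \<partial>lborel) = ennreal (nsq f)"
proof -
  have i: "integrable lborel (\<lambda>z. indicator I z * ((f z)\<^sup>2 * q z))" using f unfolding L2q_iff by simp
  have nn: "AE z in lborel. 0 \<le> indicator I z * ((f z)\<^sup>2 * q z)"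
    using AE_q_nonneg by eventually_elim (auto simp: indicator_def)
  show ?thesis unfolding nsq_eq_integral using nn_integral_eq_integral[OF i nn] .
qed

lemma nsq_scale: "nsq (\<lambda>y. c * f y) = c\<^sup>2 * nsq f"
  using inner_pw_scale[of c f "\<lambda>y. c * f y"] inner_pw_scale[of c f f] inner_pw_sym[of f "\<lambda>y. c * f y"]
  by (simp add: power2_eq_square)

lemma nsq_add_scaled:
  assumes f: "L2q f" and g: "L2q g"
  shows "nsq (\<lambda>y. f y + t * g y) = nsq f + 2 * t * inner_pw f g + t\<^sup>2 * nsq g"
proof -
  have "nsq (\<lambda>y. f y + t * g y)
      = inner_pw f (\<lambda>y. f y + t * g y) + t * inner_pw g (\<lambda>y. f y + t * g y)"
    using inner_pw_add_scaled[OF f g L2q_add_scaled[OF f g]] .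
  also have "inner_pw f (\<lambda>y. f y + t * g y) = nsq f + t * inner_pw g f"
    using inner_pw_add_scaled[OF f g f] inner_pw_sym by metis
  also have "inner_pw g (\<lambda>y. f y + t * g y) = inner_pw f g + t * nsq g"
    using inner_pw_add_scaled[OF f g g] inner_pw_sym by metis
  finally show ?thesis using inner_pw_sym[of g f] by (simp add: algebra_simps power2_eq_square)
qed

lemma nsq_add_le:
  assumes "L2q u" "L2q v"
  shows "nsq (\<lambda>y. u y + v y) \<le> 2 * nsq u + 2 * nsq v"
proof -
  have "nsq (\<lambda>y. u y + 1 * v y) = nsq u + 2 * inner_pw u v + nsq v"
    using nsq_add_scaled[OF assms, of 1] by simp
  moreover have "nsq (\<lambda>y. u y + (-1) * v y) = nsq u - 2 * inner_pw u v + nsq v"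
    using nsq_add_scaled[OF assms, of "-1"] by simp
  moreover have "0 \<le> nsq (\<lambda>y. u y + (-1) * v y)"
    by (rule nsq_nonneg)
  ultimately show ?thesis by simp
qed

lemma inner_pw_Cauchy_Schwarz:
  assumes f: "L2q f" and g: "L2q g"
  shows "(inner_pw f g)\<^sup>2 \<le> nsq f * nsq g"
proof -
  have quad: "0 \<le> nsq f + 2 * t * inner_pw f g + t\<^sup>2 * nsq g" for t
    using nsq_add_scaled[OF f g] nsq_nonneg by metis
  show ?thesis
  proof (cases "nsq g = 0")
    case True
    have "inner_pw f g = 0"
    proof (rule ccontr)
      assume ne: "inner_pw f g \<noteq> 0"
      have "0 \<le> nsq f + 2 * (- (nsq f + 1) / (2 * inner_pw f g)) * inner_pw f g"
        using quad[of "- (nsq f + 1) / (2 * inner_pw f g)"] True by simp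
      also have "\<dots> = -1" using ne by (simp add: field_simps)
      finally show False by simp
    qed
    then show ?thesis using True by simp
  next
    case False
    then have gg: "nsq g > 0" using nsq_nonneg[of g] by simp
    have "0 \<le> nsq f + 2 * (- inner_pw f g / nsq g) * inner_pw f g
        + (- inner_pw f g / nsq g)\<^sup>2 * nsq g"
      by (rule quad)
    also have "\<dots> = nsq f - (inner_pw f g)\<^sup>2 / nsq g"
      using gg by (simp add: field_simps power2_eq_square)
    finally show ?thesis using gg by (simp add: pos_divide_le_eq mult.commute)
  qed
qed

lemma nsq_eq_0_iff:
  assumes "L2q f"
  shows "nsq f = 0 \<longleftrightarrow> (AE y in lborel. y \<in> I \<longrightarrow> f y = 0)"
proof -
  have nn: "AE y in lborel. 0 \<le> indicator I y * (f y * f y * q y)"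
    using AE_q_nonneg by eventually_elim (auto simp: indicator_def)
  have "nsq f = 0 \<longleftrightarrow> (AE y in lborel. indicator I y * (f y * f y * q y) = 0)"
    unfolding inner_pw_def using integral_nonneg_eq_0_iff_AE[OF L2q_integrable_mult[OF assms assms] nn] .
  also have "\<dots> \<longleftrightarrow> (AE y in lborel. y \<in> I \<longrightarrow> f y = 0)"
  proof
    assume "AE y in lborel. indicator I y * (f y * f y * q y) = 0"
    with AE_q_pos show "AE y in lborel. y \<in> I \<longrightarrow> f y = 0"
      by eventually_elim (auto simp: indicator_def)
  next
    assume "AE y in lborel. y \<in> I \<longrightarrow> f y = 0"
    then show "AE y in lborel. indicator I y * (f y * f y * q y) = 0"
      by eventually_elim (auto simp: indicator_def)
  qed
  finally show ?thesis .
qed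

lemma inner_pw_cong:
  assumes "AE y in lborel. y \<in> I \<longrightarrow> f y = f' y"
    and [measurable]: "f \<in> borel_measurable borel" "f' \<in> borel_measurable borel" "g \<in> borel_measurable borel"
  shows "inner_pw f g = inner_pw f' g"
  unfolding inner_pw_def
proof (rule integral_cong_AE)
  show "AE y in lborel. indicator I y * (f y * g y * q y) = indicator I y * (f' y * g y * q y)"
    using assms(1) by eventually_elim (auto simp: indicator_def)
qed measurable

end

context weighted_density
begin

lemma E2_imp_L2q: "f \<in> E2 a b p w \<Longrightarrow> L2q f"
  unfolding E2_def by auto

lemma loc_int_add_scaled: "loc_int a b f \<Longrightarrow> loc_int a b g \<Longrightarrow> loc_int a b (\<lambda>y. f y + c * g y)"
  unfolding loc_int_def by auto

lemma interval_integrable_if_loc_int: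
  assumes f: "loc_int a b f" and "u \<in> I" "v \<in> I"
  shows "interval_lebesgue_integrable lborel (ereal u) (ereal v) f"
proof -
  have "set_integrable lborel {min u v..max u v} f"
    using assms unfolding loc_int_def Ioi_def by (auto simp: min_def max_def)
  then have "set_integrable lborel {min u v<..<max u v} f"
    by (rule set_integrable_subset) auto
  then show ?thesis unfolding interval_lebesgue_integrable_def by (auto simp: min_def max_def)
qed

lemma L2p_const: "L2 a b p (\<lambda>_. k)"
proof -
  have "integrable lborel (\<lambda>y. k\<^sup>2 * (indicator I y * p y))" using integrable_p by simp
  then show ?thesis unfolding L2_def set_integrable_real by (simp add: mult.left_commute)
qed

lemma E2_add_scaled:
  assumes f: "f \<in> E2 a b p w" and g: "g \<in> E2 a b p w"
  shows "(\<lambda>y. f y + c * g y) \<in> E2 a b p w"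
proof -
  have fL: "L2q f" and gL: "L2q g" and fl: "loc_int a b f" and gl: "loc_int a b g"
    using f g by (auto simp: E2_def)
  have [measurable]: "f \<in> borel_measurable borel" "g \<in> borel_measurable borel"
    using fL gL by (auto dest: L2_meas)
  obtain x1 where x1: "x1 \<in> I" "L2 a b p (\<lambda>x. LBINT y=ereal x1..ereal x. f y)"
    using f by (auto simp: E2_def)
  obtain x2 where x2: "x2 \<in> I" "L2 a b p (\<lambda>x. LBINT y=ereal x2..ereal x. g y)"
    using g by (auto simp: E2_def)
  define k where "k = (LBINT y=ereal x2..ereal x1. g y)"
  have "AE y in lborel. y \<in> I \<longrightarrow> 0 \<le> p y" using AE_p_pos by eventually_elim auto
  then have L: "L2 a b p (\<lambda>x. (LBINT y=ereal x1..ereal x. f y) + c * ((LBINT y=ereal x2..ereal x. g y) + (-1) * k))"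
    by (intro L2_add_scaled x1(2) x2(2) L2p_const p_measurable)
  have "(LBINT y=ereal x1..ereal x. f y + c * g y)
      = (LBINT y=ereal x1..ereal x. f y) + c * ((LBINT y=ereal x2..ereal x. g y) + (-1) * k)"
    if x: "x \<in> I" for x
  proof -
    have "(LBINT y=ereal x1..ereal x. f y + c * g y)
        = (LBINT y=ereal x1..ereal x. f y) + c * (LBINT y=ereal x1..ereal x. g y)"
      using interval_integrable_if_loc_int[OF fl x1(1) x] interval_integrable_if_loc_int[OF gl x1(1) x] by simp
    moreover have "k + (LBINT y=ereal x1..ereal x. g y) = (LBINT y=ereal x2..ereal x. g y)"
      unfolding k_def
    proof (rule interval_integral_sum)
      have "min x2 (min x1 x) \<in> I" "max x2 (max x1 x) \<in> I"
        using x x1(1) x2(1) by (simp_all add: min_def max_def)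
      from interval_integrable_if_loc_int[OF gl this]
      show "interval_lebesgue_integrable lborel (min (ereal x2) (min (ereal x1) (ereal x)))
          (max (ereal x2) (max (ereal x1) (ereal x))) g"
        by simp
    qed
    ultimately show ?thesis by simp
  qed
  then have "L2 a b p (\<lambda>x. LBINT y=ereal x1..ereal x. f y + c * g y)"
    by (intro L2_cong[OF L] borel_measurable_interval_integral_upper) measurable
  then show ?thesis
    unfolding E2_def using L2q_add_scaled[OF fL gL] loc_int_add_scaled[OF fl gl] x1(1) by auto
qed

lemma E2_zero: "f \<in> E2 a b p w \<Longrightarrow> (\<lambda>_. 0) \<in> E2 a b p w"
  using E2_add_scaled[of f f "-1"] by simp

lemma E2_scale: "f \<in> E2 a b p w \<Longrightarrow> (\<lambda>y. c * f y) \<in> E2 a b p w"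
  using E2_add_scaled[OF E2_zero, of f f c] by simp

end

locale kernel_at_point = weighted_density +
  fixes x0 :: real
  assumes x0_in: "x0 \<in> I" and p_x0: "p x0 > 0" and w_x0: "w x0 > 0"
    and kw_L2: "L2q (kw a b p w x0)"
begin

abbreviation "T \<equiv> Lt a b p w"
abbreviation "h0 \<equiv> kw a b p w x0"

lemma Lt_eq: "T f y = 1 / q y * integral\<^sup>L lborel (\<lambda>z. indicator I z * (K y z * f z))"
  unfolding Lt_def set_lebesgue_integral_real ..

lemma mult_Lt:
  assumes "0 < q y"
  shows "q y * T f y = integral\<^sup>L lborel (\<lambda>z. indicator I z * (K y z * f z))"
proof -
  have "q y \<noteq> 0" using assms by (metis less_irrefl)
  then show ?thesis unfolding Lt_eq by simp
qed

lemma Kker_at_eq: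
  assumes "0 < q z"
  shows "K x0 z = h0 z * (q x0 * q z)"
proof -
  have "p z \<noteq> 0" "w z \<noteq> 0" using assms by auto
  then show ?thesis using p_x0 w_x0 unfolding kw_def kker_def by (simp add: field_simps)
qed

lemma integral_Kker_at_eq:
  assumes "L2q f"
  shows "integral\<^sup>L lborel (\<lambda>z. indicator I z * (K x0 z * f z)) = q x0 * inner_pw h0 f"
    and "integrable lborel (\<lambda>z. indicator I z * (K x0 z * f z))"
proof -
  have [measurable]: "f \<in> borel_measurable borel" "h0 \<in> borel_measurable borel"
    using L2_meas[OF assms] L2_meas[OF kw_L2] .
  have i: "integrable lborel (\<lambda>z. q x0 * (indicator I z * (h0 z * f z * q z)))"
    using L2q_integrable_mult[OF kw_L2 assms] by simp
  have ae: "AE z in lborel. q x0 * (indicator I z * (h0 z * f z * q z)) = indicator I z * (K x0 z * f z)"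
    using AE_q_pos by eventually_elim (auto simp: indicator_def Kker_at_eq)
  show "integrable lborel (\<lambda>z. indicator I z * (K x0 z * f z))"
    by (rule integrable_cong_AE_imp[OF i _ ae]) measurable
  have "integral\<^sup>L lborel (\<lambda>z. indicator I z * (K x0 z * f z))
      = integral\<^sup>L lborel (\<lambda>z. q x0 * (indicator I z * (h0 z * f z * q z)))"
  proof (rule integral_cong_AE)
    show "AE z in lborel. indicator I z * (K x0 z * f z) = q x0 * (indicator I z * (h0 z * f z * q z))"
      using ae by eventually_elim (erule sym)
  qed measurable
  then show "integral\<^sup>L lborel (\<lambda>z. indicator I z * (K x0 z * f z)) = q x0 * inner_pw h0 f"
    unfolding inner_pw_def by simp
qed

lemma integrable_Kker_mult:
  assumes f: "L2q f"
  shows "integrable lborel (\<lambda>z. indicator I z * (K y z * f z))"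
proof (rule Bochner_Integration.integrable_bound)
  define c where "c = 1 / (P x0 * (1 - P x0))"
  have K_le: "K y z \<le> c * K x0 z" for z
    using Kker_le_Kker_at[OF x0_in, of y z] unfolding c_def by simp
  have "c > 0" unfolding c_def using cdf_pos[OF x0_in] cdf_less_1[OF x0_in] by simp
  show "integrable lborel (\<lambda>z. c * \<bar>indicator I z * (K x0 z * f z)\<bar>)"
    using integral_Kker_at_eq(2)[OF f] by auto
  show "(\<lambda>z. indicator I z * (K y z * f z)) \<in> borel_measurable lborel"
    using L2_meas[OF f] by measurable
  show "AE z in lborel. norm (indicator I z * (K y z * f z)) \<le> norm (c * \<bar>indicator I z * (K x0 z * f z)\<bar>)"
  proof (intro AE_I2)
    fix z
    have "K y z * \<bar>f z\<bar> \<le> c * K x0 z * \<bar>f z\<bar>" using K_le by (intro mult_right_mono) auto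
    then show "norm (indicator I z * (K y z * f z)) \<le> norm (c * \<bar>indicator I z * (K x0 z * f z)\<bar>)"
      using Kker_nonneg[of y z] Kker_nonneg[of x0 z] \<open>c > 0\<close> by (auto simp: indicator_def abs_mult)
  qed
qed

lemma Lt_at_point: "L2q f \<Longrightarrow> T f x0 = inner_pw h0 f"
  using integral_Kker_at_eq(1) p_x0 w_x0 unfolding Lt_eq by simp

lemma Lt_add_scaled:
  assumes f: "L2q f" and g: "L2q g"
  shows "T (\<lambda>z. f z + c * g z) y = T f y + c * T g y"
proof -
  have "integral\<^sup>L lborel (\<lambda>z. indicator I z * (K y z * (f z + c * g z))) =
      integral\<^sup>L lborel (\<lambda>z. indicator I z * (K y z * f z) + c * (indicator I z * (K y z * g z)))"
    by (simp add: algebra_simps)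
  also have "\<dots> = integral\<^sup>L lborel (\<lambda>z. indicator I z * (K y z * f z))
      + c * integral\<^sup>L lborel (\<lambda>z. indicator I z * (K y z * g z))"
    using integrable_Kker_mult[OF f, of y] integrable_Kker_mult[OF g, of y] by simp
  finally show ?thesis unfolding Lt_eq by (simp add: algebra_simps)
qed

lemma Lt_scale: "T (\<lambda>z. c * f z) y = c * T f y"
  unfolding Lt_eq by (simp add: ac_simps)

lemma Lt_measurable[measurable]:
  assumes "L2q f"
  shows "T f \<in> borel_measurable borel"
proof -
  have [measurable]: "f \<in> borel_measurable borel" using L2_meas[OF assms] .
  show ?thesis unfolding Lt_eq[abs_def] by measurable
qed

lemma Lt_cong:
  assumes "AE z in lborel. z \<in> I \<longrightarrow> f z = g z"
    and [measurable]: "f \<in> borel_measurable borel" "g \<in> borel_measurable borel"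
  shows "T f y = T g y"
proof -
  have "integral\<^sup>L lborel (\<lambda>z. indicator I z * (K y z * f z)) = integral\<^sup>L lborel (\<lambda>z. indicator I z * (K y z * g z))"
  proof (rule integral_cong_AE)
    show "AE z in lborel. indicator I z * (K y z * f z) = indicator I z * (K y z * g z)"
      using assms(1) by eventually_elim (auto simp: indicator_def)
  qed measurable
  then show ?thesis unfolding Lt_eq by simp
qed

lemma abs_Lt_le:
  assumes "q y > 0"
  shows "\<bar>T g y\<bar> \<le> T (\<lambda>z. \<bar>g z\<bar>) y"
proof -
  have "\<bar>integral\<^sup>L lborel (\<lambda>z. indicator I z * (K y z * g z))\<bar>
      \<le> integral\<^sup>L lborel (\<lambda>z. norm (indicator I z * (K y z * g z)))"
    using integral_norm_bound[of lborel "\<lambda>z. indicator I z * (K y z * g z)"] by simp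
  also have "\<dots> = integral\<^sup>L lborel (\<lambda>z. indicator I z * (K y z * \<bar>g z\<bar>))"
    by (intro Bochner_Integration.integral_cong) (auto simp: abs_mult Kker_nonneg indicator_def)
  finally have le: "\<bar>integral\<^sup>L lborel (\<lambda>z. indicator I z * (K y z * g z))\<bar>
      \<le> integral\<^sup>L lborel (\<lambda>z. indicator I z * (K y z * \<bar>g z\<bar>))" .
  have c: "0 < 1 / q y" using assms by simp
  show ?thesis
    unfolding Lt_eq abs_mult abs_of_pos[OF c] using le c by (intro mult_left_mono) auto
qed

end

locale positive_eigenfunction = kernel_at_point +
  fixes e1 :: "real \<Rightarrow> real" and \<kappa> :: real
  assumes e1_E2: "e1 \<in> E2 a b p w"
    and eigen: "AE y in lborel. y \<in> I \<longrightarrow> T e1 y = \<kappa> * e1 y"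
    and e1_pos: "AE y in lborel. y \<in> I \<longrightarrow> e1 y > 0"
    and e1_normsq: "normsq a b p w e1 = 1"
begin

lemma e1_L2q: "L2q e1"
  using E2_imp_L2q[OF e1_E2] .

lemma e1_measurable[measurable]: "e1 \<in> borel_measurable borel"
  using L2_meas[OF e1_L2q] .

lemma AE_integral_Kker_e1:
  "AE y in lborel. y \<in> I \<longrightarrow> q y > 0 \<and> e1 y > 0 \<and>
     integral\<^sup>L lborel (\<lambda>z. indicator I z * (K y z * e1 z)) = \<kappa> * q y * e1 y"
  using AE_q_pos e1_pos eigen
proof eventually_elim
  case (elim y)
  show ?case
  proof
    assume "y \<in> I"
    with elim have "q y > 0" "e1 y > 0" "T e1 y = \<kappa> * e1 y" by auto
    moreover from mult_Lt[OF \<open>q y > 0\<close>, of e1]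
    have "integral\<^sup>L lborel (\<lambda>z. indicator I z * (K y z * e1 z)) = q y * T e1 y" ..
    ultimately show "q y > 0 \<and> e1 y > 0 \<and> integral\<^sup>L lborel (\<lambda>z. indicator I z * (K y z * e1 z)) = \<kappa> * q y * e1 y"
      by simp
  qed
qed

lemma eigenvalue_pos: "\<kappa> > 0"
proof -
  obtain y where y: "y \<in> I" "q y > 0" "e1 y > 0"
    "integral\<^sup>L lborel (\<lambda>z. indicator I z * (K y z * e1 z)) = \<kappa> * q y * e1 y"
    using AE_ex_in_pos_measure[OF AE_integral_Kker_e1 emeasure_I_pos] by auto
  have "AE z in lborel. z \<in> I \<longrightarrow> K y z * e1 z > 0"
    using e1_pos by eventually_elim (use y(1) Kker_pos in auto)
  from integral_indicator_pos_AE[OF _ emeasure_I_pos integrable_Kker_mult[OF e1_L2q] this]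
  have "0 < \<kappa> * q y * e1 y" using y(4) by simp
  then show ?thesis using y(2,3) by (simp add: zero_less_mult_iff)
qed

lemma nsq_e1: "nsq e1 = 1"
  using e1_normsq normsq_eq_nsq by simp

lemma nn_integral_Kker_e1:
  "AE y in lborel. y \<in> I \<longrightarrow>
     (\<integral>\<^sup>+z. ennreal (indicator I z * (K y z * e1 z)) \<partial>lborel) = ennreal (\<kappa> * q y * e1 y)"
  using AE_integral_Kker_e1
proof eventually_elim
  case (elim y)
  have "AE z in lborel. 0 \<le> indicator I z * (K y z * e1 z)"
    using e1_pos by eventually_elim (auto simp: indicator_def Kker_nonneg)
  then show ?case
    using elim nn_integral_eq_integral[OF integrable_Kker_mult[OF e1_L2q]] by auto
qed

end

context positive_eigenfunction
begin

(* Schur test: Cauchy-Schwarz against e1 bounds (T f y)\<^sup>2 q y by \<kappa> e1 y * schur_integral f y, and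
   by Tonelli and the symmetry of K, integrating the bound over y gives \<kappa>\<^sup>2 * nsq f. *)
definition schur_integral :: "(real \<Rightarrow> real) \<Rightarrow> real \<Rightarrow> ennreal" where
  "schur_integral f y = (\<integral>\<^sup>+z. ennreal (indicator I z * K y z * (f z)\<^sup>2 / e1 z) \<partial>lborel)"

lemma schur_integral_measurable[measurable]:
  assumes [measurable]: "f \<in> borel_measurable borel"
  shows "schur_integral f \<in> borel_measurable borel"
  unfolding schur_integral_def[abs_def] by measurable

lemma Lt_sq_le_schur_integral:
  assumes f: "L2q f"
  shows "AE y in lborel. ennreal (indicator I y * ((T f y)\<^sup>2 * q y))
    \<le> ennreal (indicator I y * (\<kappa> * e1 y)) * schur_integral f y"
  using AE_integral_Kker_e1 nn_integral_Kker_e1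
proof eventually_elim
  case (elim y)
  show ?case
  proof (cases "y \<in> I")
    case True
    have [measurable]: "f \<in> borel_measurable borel" using L2_meas[OF f] .
    have qy: "q y > 0" "e1 y > 0" using elim True by auto
    let ?A = "\<integral>\<^sup>+z. ennreal (indicator I z * K y z * \<bar>f z\<bar>) \<partial>lborel"
    have "ennreal \<bar>q y * T f y\<bar> = ennreal (norm (integral\<^sup>L lborel (\<lambda>z. indicator I z * (K y z * f z))))"
      using mult_Lt[OF qy(1), of f] by simp
    also have "\<dots> \<le> (\<integral>\<^sup>+z. norm (indicator I z * (K y z * f z)) \<partial>lborel)"
      by (rule integral_norm_bound_ennreal[OF integrable_Kker_mult[OF f]])
    also have "\<dots> = ?A" by (intro nn_integral_cong) (auto simp: indicator_def abs_mult Kker_nonneg)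
    finally have "ennreal \<bar>q y * T f y\<bar> \<le> ?A" .
    then have "ennreal ((q y * T f y)\<^sup>2) \<le> ?A\<^sup>2"
      using power_mono[of "ennreal \<bar>q y * T f y\<bar>" ?A 2] by (simp add: ennreal_power)
    also have "\<dots> \<le> (\<integral>\<^sup>+z. ennreal (indicator I z * K y z * e1 z) \<partial>lborel) * schur_integral f y"
    proof -
      have "AE z in lborel. 0 \<le> indicator I z * K y z \<and> (indicator I z * K y z = 0 \<or> 0 < e1 z)"
        using e1_pos by eventually_elim (auto simp: indicator_def Kker_nonneg)
      then show ?thesis
        unfolding schur_integral_def
        by (rule nn_integral_Cauchy_Schwarz_weighted[rotated 3]) (measurable, measurable, measurable)
    qed
    also have "\<dots> = ennreal (q y * (\<kappa> * e1 y)) * schur_integral f y"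
      using elim True by (simp add: ac_simps)
    also have "\<dots> = ennreal (q y) * (ennreal (\<kappa> * e1 y) * schur_integral f y)"
      using qy eigenvalue_pos by (metis ennreal_mult less_imp_le mult.assoc mult_pos_pos)
    finally have "ennreal (q y) * ennreal ((T f y)\<^sup>2 * q y) \<le> ennreal (q y) * (ennreal (\<kappa> * e1 y) * schur_integral f y)"
      using qy by (simp add: ennreal_mult'[symmetric] power2_eq_square ac_simps)
    moreover have "ennreal (q y) \<noteq> 0" "ennreal (q y) \<noteq> top" using qy by auto
    ultimately show ?thesis using True by (simp add: ennreal_mult_le_mult_iff)
  qed simp
qed

lemma nn_integral_schur_column:
  "AE z in lborel. (\<integral>\<^sup>+y. ennreal (\<kappa> * indicator I y * e1 y * (indicator I z * K y z * (f z)\<^sup>2 / e1 z)) \<partial>lborel)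
    = ennreal (\<kappa>\<^sup>2) * ennreal (indicator I z * ((f z)\<^sup>2 * q z))"
  using AE_integral_Kker_e1 nn_integral_Kker_e1
proof eventually_elim
  case (elim z)
  show ?case
  proof (cases "z \<in> I")
    case True
    then have e: "e1 z > 0" "q z > 0" using elim by auto
    define c where "c = \<kappa> * ((f z)\<^sup>2 / e1 z)"
    have c: "0 \<le> c" unfolding c_def using e eigenvalue_pos by simp
    have "(\<integral>\<^sup>+y. ennreal (\<kappa> * indicator I y * e1 y * (indicator I z * K y z * (f z)\<^sup>2 / e1 z)) \<partial>lborel)
        = (\<integral>\<^sup>+y. ennreal c * ennreal (indicator I y * (K z y * e1 y)) \<partial>lborel)"
      unfolding c_def using True c
      by (intro nn_integral_cong) (simp add: ennreal_mult'[symmetric] Kker_sym[of z] c_def ac_simps)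
    also have "\<dots> = ennreal (c * (\<kappa> * q z * e1 z))"
      using elim True c by (subst nn_integral_cmult) (auto simp: ennreal_mult')
    also have "c * (\<kappa> * q z * e1 z) = \<kappa>\<^sup>2 * ((f z)\<^sup>2 * q z)"
      unfolding c_def using e by (simp add: field_simps power2_eq_square)
    finally show ?thesis using True by (simp add: ennreal_mult')
  qed simp
qed

lemma nn_integral_schur_integral:
  assumes f: "L2q f"
  shows "(\<integral>\<^sup>+y. ennreal (indicator I y * (\<kappa> * e1 y)) * schur_integral f y \<partial>lborel) = ennreal (\<kappa>\<^sup>2 * nsq f)"
proof -
  have [measurable]: "f \<in> borel_measurable borel" using L2_meas[OF f] .
  define H where "H y z = ennreal (\<kappa> * indicator I y * e1 y * (indicator I z * K y z * (f z)\<^sup>2 / e1 z))" for y z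
  have "AE y in lborel. ennreal (indicator I y * (\<kappa> * e1 y)) * schur_integral f y = (\<integral>\<^sup>+z. H y z \<partial>lborel)"
    using e1_pos
  proof eventually_elim
    case (elim y)
    show ?case
    proof (cases "y \<in> I")
      case True
      then have "0 \<le> indicator I y * (\<kappa> * e1 y)" using elim eigenvalue_pos by simp
      then show ?thesis
        unfolding schur_integral_def H_def
        by (subst nn_integral_cmult[symmetric]) (auto simp: ennreal_mult'[symmetric] ac_simps)
    qed (simp add: H_def)
  qed
  then have "(\<integral>\<^sup>+y. ennreal (indicator I y * (\<kappa> * e1 y)) * schur_integral f y \<partial>lborel)
      = (\<integral>\<^sup>+y. (\<integral>\<^sup>+z. H y z \<partial>lborel) \<partial>lborel)"
    by (rule nn_integral_cong_AE)
  also have "\<dots> = (\<integral>\<^sup>+z. (\<integral>\<^sup>+y. H y z \<partial>lborel) \<partial>lborel)"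
    by (rule lborel_pair.Fubini'[symmetric]) (measurable, simp add: H_def)
  also have "\<dots> = (\<integral>\<^sup>+z. ennreal (\<kappa>\<^sup>2) * ennreal (indicator I z * ((f z)\<^sup>2 * q z)) \<partial>lborel)"
    unfolding H_def by (rule nn_integral_cong_AE[OF nn_integral_schur_column])
  also have "\<dots> = ennreal (\<kappa>\<^sup>2) * ennreal (nsq f)"
    by (subst nn_integral_cmult) (auto simp: nn_integral_sq_eq_nsq[OF f])
  also have "\<dots> = ennreal (\<kappa>\<^sup>2 * nsq f)" by (simp add: ennreal_mult')
  finally show ?thesis .
qed

lemma nn_integral_Lt_sq_le:
  assumes f: "L2q f"
  shows "(\<integral>\<^sup>+y. ennreal (indicator I y * ((T f y)\<^sup>2 * q y)) \<partial>lborel) \<le> ennreal (\<kappa>\<^sup>2 * nsq f)"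
  using nn_integral_mono_AE[OF Lt_sq_le_schur_integral[OF f]] nn_integral_schur_integral[OF f] by simp

lemma Lt_L2q:
  assumes f: "L2q f"
  shows "L2q (T f)"
proof -
  have [measurable]: "T f \<in> borel_measurable borel" using Lt_measurable[OF f] .
  have "(\<integral>\<^sup>+y. ennreal (norm (indicator I y * ((T f y)\<^sup>2 * q y))) \<partial>lborel) =
      (\<integral>\<^sup>+y. ennreal (indicator I y * ((T f y)\<^sup>2 * q y)) \<partial>lborel)"
    by (rule nn_integral_cong_AE) (use AE_q_nonneg in \<open>eventually_elim, auto simp: indicator_def\<close>)
  also have "\<dots> < \<infinity>" using nn_integral_Lt_sq_le[OF f] by (simp add: le_less_trans)
  finally have "integrable lborel (\<lambda>y. indicator I y * ((T f y)\<^sup>2 * q y))"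
    by (intro integrableI_bounded) measurable
  then show ?thesis unfolding L2q_iff by simp
qed

lemma nsq_Lt_le:
  assumes f: "L2q f"
  shows "nsq (T f) \<le> \<kappa>\<^sup>2 * nsq f"
proof -
  have "ennreal (nsq (T f)) = (\<integral>\<^sup>+y. ennreal (indicator I y * ((T f y)\<^sup>2 * q y)) \<partial>lborel)"
    using nn_integral_sq_eq_nsq[OF Lt_L2q[OF f]] ..
  also have "\<dots> \<le> ennreal (\<kappa>\<^sup>2 * nsq f)" by (rule nn_integral_Lt_sq_le[OF f])
  finally show ?thesis using nsq_nonneg[of f] by simp
qed

end

context positive_eigenfunction
begin

lemma integral_Kker_row:
  assumes "L2q u"
  shows "AE y in lborel. indicator I y * (T u y * v y * q y)
    = (LBINT z. indicator I y * indicator I z * K y z * u z * v y)"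
  using AE_q_pos
proof eventually_elim
  case (elim y)
  show ?case
  proof (cases "y \<in> I")
    case True
    then have "q y > 0" using elim by auto
    have "(LBINT z. indicator I y * indicator I z * K y z * u z * v y)
        = (LBINT z. v y * (indicator I z * (K y z * u z)))"
      using True by (simp add: ac_simps)
    also have "\<dots> = v y * (q y * T u y)" using mult_Lt[OF \<open>q y > 0\<close>, of u] by simp
    finally show ?thesis using True by (simp add: ac_simps)
  qed simp
qed

lemma integrable_Kker_pair:
  assumes u: "L2q u" and v: "L2q v"
  shows "integrable (lborel \<Otimes>\<^sub>M lborel) (\<lambda>(y, z). indicator I y * indicator I z * K y z * u z * v y)"
proof (rule lborel_pair.Fubini_integrable)
  have [measurable]: "u \<in> borel_measurable borel" "v \<in> borel_measurable borel"
    using L2_meas[OF u] L2_meas[OF v] .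
  have [measurable]: "T (\<lambda>z. \<bar>u z\<bar>) \<in> borel_measurable borel"
    using Lt_measurable[OF L2q_abs[OF u]] .
  show "(\<lambda>(y, z). indicator I y * indicator I z * K y z * u z * v y) \<in> borel_measurable (lborel \<Otimes>\<^sub>M lborel)"
    by measurable
  show "AE y in lborel. integrable lborel (\<lambda>z. case (y, z) of (y, z) \<Rightarrow> indicator I y * indicator I z * K y z * u z * v y)"
  proof (intro AE_I2)
    fix y
    have "integrable lborel (\<lambda>z. (indicator I y * v y) * (indicator I z * (K y z * u z)))"
      using integrable_Kker_mult[OF u, of y] by simp
    then show "integrable lborel (\<lambda>z. case (y, z) of (y, z) \<Rightarrow> indicator I y * indicator I z * K y z * u z * v y)"
      by (simp add: ac_simps)
  qed
  have i: "integrable lborel (\<lambda>y. indicator I y * (T (\<lambda>z. \<bar>u z\<bar>) y * \<bar>v y\<bar> * q y))"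
    using L2q_integrable_mult[OF Lt_L2q[OF L2q_abs[OF u]] L2q_abs[OF v]] .
  have ae: "AE y in lborel. indicator I y * (T (\<lambda>z. \<bar>u z\<bar>) y * \<bar>v y\<bar> * q y)
      = (LBINT z. norm (case (y, z) of (y, z) \<Rightarrow> indicator I y * indicator I z * K y z * u z * v y))"
    using integral_Kker_row[OF L2q_abs[OF u], of "\<lambda>y. \<bar>v y\<bar>"]
    by eventually_elim (simp add: abs_mult Kker_nonneg)
  show "integrable lborel
      (\<lambda>y. LBINT z. norm (case (y, z) of (y, z) \<Rightarrow> indicator I y * indicator I z * K y z * u z * v y))"
    by (rule integrable_cong_AE_imp[OF i _ ae]) measurable
qed

lemma inner_pw_Lt_sym:
  assumes u: "L2q u" and v: "L2q v"
  shows "inner_pw (T u) v = inner_pw u (T v)"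
proof -
  have [measurable]: "u \<in> borel_measurable borel" "v \<in> borel_measurable borel"
    "T u \<in> borel_measurable borel" "T v \<in> borel_measurable borel"
    using L2_meas[OF u] L2_meas[OF v] Lt_measurable[OF u] Lt_measurable[OF v] .
  define F where "F y z = indicator I y * indicator I z * K y z * u z * v y" for y z
  have "inner_pw (T u) v = (LBINT y. (LBINT z. F y z))"
    unfolding inner_pw_def F_def by (rule integral_cong_AE[OF _ _ integral_Kker_row[OF u]]) measurable
  also have "\<dots> = (LBINT z. (LBINT y. F y z))"
    using integrable_Kker_pair[OF u v] unfolding F_def by (intro lborel_pair.Fubini_integral[symmetric]) simp
  also have "\<dots> = inner_pw u (T v)"
    unfolding inner_pw_def F_def
  proof (rule integral_cong_AE[symmetric])
    show "AE z in lborel. indicator I z * (u z * T v z * q z)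
        = (LBINT y. indicator I y * indicator I z * K y z * u z * v y)"
      using integral_Kker_row[OF v, of u] by eventually_elim (simp add: Kker_sym ac_simps)
  qed measurable
  finally show ?thesis .
qed

lemma inner_pw_Lt_e1:
  assumes "L2q f"
  shows "inner_pw (T f) e1 = \<kappa> * inner_pw f e1"
proof -
  have "inner_pw (T f) e1 = inner_pw (T e1) f"
    using inner_pw_Lt_sym[OF assms e1_L2q] inner_pw_sym by simp
  also have "\<dots> = inner_pw (\<lambda>y. \<kappa> * e1 y) f"
    by (rule inner_pw_cong[OF eigen]) (use L2_meas[OF assms] Lt_measurable[OF e1_L2q] in auto)
  also have "\<dots> = \<kappa> * inner_pw f e1" by (simp add: inner_pw_scale inner_pw_sym)
  finally show ?thesis .
qed

end

context positive_eigenfunction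
begin

lemma AE_eq_0_if_nonneg_orth_e1:
  assumes f: "L2q f" and nonneg: "AE y in lborel. y \<in> I \<longrightarrow> 0 \<le> f y" and orth: "inner_pw f e1 = 0"
  shows "AE y in lborel. y \<in> I \<longrightarrow> f y = 0"
proof -
  have nn: "AE y in lborel. 0 \<le> indicator I y * (f y * e1 y * q y)"
    using nonneg e1_pos AE_q_pos by eventually_elim (auto simp: indicator_def)
  have "AE y in lborel. indicator I y * (f y * e1 y * q y) = 0"
    using integral_nonneg_eq_0_iff_AE[OF L2q_integrable_mult[OF f e1_L2q] nn] orth
    unfolding inner_pw_def by simp
  then show ?thesis
    using e1_pos AE_q_pos by eventually_elim (auto simp: indicator_def)
qed

lemma Lt_eq_if_super_eigen:
  assumes h: "L2q h" and super: "AE y in lborel. y \<in> I \<longrightarrow> \<kappa> * h y \<le> T h y"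
  shows "AE y in lborel. y \<in> I \<longrightarrow> T h y = \<kappa> * h y"
proof -
  define d where "d y = T h y + (- \<kappa>) * h y" for y
  have d: "L2q d" unfolding d_def by (rule L2q_add_scaled[OF Lt_L2q[OF h] h])
  have "inner_pw d e1 = inner_pw (T h) e1 + (- \<kappa>) * inner_pw h e1"
    unfolding d_def by (rule inner_pw_add_scaled[OF Lt_L2q[OF h] h e1_L2q])
  then have "inner_pw d e1 = 0" using inner_pw_Lt_e1[OF h] by simp
  moreover have "AE y in lborel. y \<in> I \<longrightarrow> 0 \<le> d y"
    using super by eventually_elim (auto simp: d_def)
  ultimately have "AE y in lborel. y \<in> I \<longrightarrow> d y = 0"
    using AE_eq_0_if_nonneg_orth_e1[OF d] by simp
  then show ?thesis by eventually_elim (simp add: d_def)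
qed

lemma sign_constant_if_abs_Lt_eq:
  assumes g: "L2q g" and y: "y \<in> I" "q y > 0" and eq: "T (\<lambda>z. \<bar>g z\<bar>) y = \<bar>T g y\<bar>"
  obtains s :: real where "\<bar>s\<bar> = 1" and "AE z in lborel. z \<in> I \<longrightarrow> s * g z = \<bar>g z\<bar>"
proof -
  define X where "X = integral\<^sup>L lborel (\<lambda>z. indicator I z * (K y z * g z))"
  define s where "s = (if X \<ge> 0 then 1 else (-1::real))"
  have s: "\<bar>s\<bar> = 1" "s * X = \<bar>X\<bar>" unfolding s_def by auto
  have "integral\<^sup>L lborel (\<lambda>z. indicator I z * (K y z * \<bar>g z\<bar>)) = \<bar>X\<bar>"
    using eq mult_Lt[OF y(2), of g] mult_Lt[OF y(2), of "\<lambda>z. \<bar>g z\<bar>"] y(2)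
    unfolding X_def by (metis abs_mult abs_of_pos)
  then have "integral\<^sup>L lborel (\<lambda>z. indicator I z * (K y z * (\<bar>g z\<bar> + (-s) * g z))) = 0"
    using integrable_Kker_mult[OF L2q_abs[OF g], of y] integrable_Kker_mult[OF g, of y] s(2)
    unfolding X_def by (simp add: algebra_simps)
  moreover have nn: "AE z in lborel. 0 \<le> indicator I z * (K y z * (\<bar>g z\<bar> + (-s) * g z))"
  proof (intro AE_I2)
    fix z
    have "s * g z \<le> \<bar>g z\<bar>" using s(1) by (metis abs_ge_self abs_mult mult_1)
    then show "0 \<le> indicator I z * (K y z * (\<bar>g z\<bar> + (-s) * g z))"
      using Kker_nonneg[of y z] by (simp add: indicator_def)
  qed
  ultimately have "AE z in lborel. indicator I z * (K y z * (\<bar>g z\<bar> + (-s) * g z)) = 0"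
    using integral_nonneg_eq_0_iff_AE[OF integrable_Kker_mult[OF L2q_add_scaled[OF L2q_abs[OF g] g]] nn] by simp
  then have "AE z in lborel. z \<in> I \<longrightarrow> s * g z = \<bar>g z\<bar>"
  proof eventually_elim
    case (elim z)
    show ?case
    proof
      assume "z \<in> I"
      with elim Kker_pos[OF y(1) this] show "s * g z = \<bar>g z\<bar>" by simp
    qed
  qed
  with s(1) show ?thesis by (rule that)
qed

lemma eigenvector_orth_e1_eq_0:
  assumes g: "L2q g" and orth: "inner_pw g e1 = 0"
    and ev: "AE y in lborel. y \<in> I \<longrightarrow> T g y = \<mu> * g y" and mu: "\<bar>\<mu>\<bar> = \<kappa>"
  shows "AE y in lborel. y \<in> I \<longrightarrow> g y = 0"
proof -
  have abs_ev: "AE y in lborel. y \<in> I \<longrightarrow> \<bar>T g y\<bar> = \<kappa> * \<bar>g y\<bar> \<and> q y > 0"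
    using ev AE_q_pos by eventually_elim (auto simp: mu abs_mult)
  have "AE y in lborel. y \<in> I \<longrightarrow> \<kappa> * \<bar>g y\<bar> \<le> T (\<lambda>z. \<bar>g z\<bar>) y"
    using abs_ev by eventually_elim (metis abs_Lt_le)
  from Lt_eq_if_super_eigen[OF L2q_abs[OF g] this]
  have "AE y in lborel. y \<in> I \<longrightarrow> T (\<lambda>z. \<bar>g z\<bar>) y = \<bar>T g y\<bar> \<and> q y > 0"
    using abs_ev by eventually_elim auto
  from AE_ex_in_pos_measure[OF this emeasure_I_pos]
  obtain y where "y \<in> I" "T (\<lambda>z. \<bar>g z\<bar>) y = \<bar>T g y\<bar>" "q y > 0" by auto
  then obtain s where s: "\<bar>s\<bar> = 1" "AE z in lborel. z \<in> I \<longrightarrow> s * g z = \<bar>g z\<bar>"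
    using sign_constant_if_abs_Lt_eq[OF g] by blast
  have "inner_pw (\<lambda>z. s * g z) e1 = 0" using orth by (simp add: inner_pw_scale)
  moreover have "AE z in lborel. z \<in> I \<longrightarrow> 0 \<le> s * g z"
    using s(2) by eventually_elim auto
  ultimately have "AE z in lborel. z \<in> I \<longrightarrow> s * g z = 0"
    using AE_eq_0_if_nonneg_orth_e1[OF L2q_scale[OF g]] by simp
  moreover have "s \<noteq> 0" using s(1) by auto
  ultimately show ?thesis by auto
qed

lemma sq_eigenvector_orth_e1_eq_0:
  assumes \<phi>: "L2q \<phi>" and orth: "inner_pw \<phi> e1 = 0"
    and ev: "AE y in lborel. y \<in> I \<longrightarrow> T (T \<phi>) y = \<kappa>\<^sup>2 * \<phi> y"
  shows "AE y in lborel. y \<in> I \<longrightarrow> \<phi> y = 0"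
proof -
  have T\<phi>: "L2q (T \<phi>)" using Lt_L2q[OF \<phi>] .
  define \<psi> where "\<psi> y = T \<phi> y + (- \<kappa>) * \<phi> y" for y
  have \<psi>: "L2q \<psi>" unfolding \<psi>_def by (rule L2q_add_scaled[OF T\<phi> \<phi>])
  have "inner_pw \<psi> e1 = inner_pw (T \<phi>) e1 + (- \<kappa>) * inner_pw \<phi> e1"
    unfolding \<psi>_def by (rule inner_pw_add_scaled[OF T\<phi> \<phi> e1_L2q])
  then have \<psi>_orth: "inner_pw \<psi> e1 = 0" using inner_pw_Lt_e1[OF \<phi>] orth by simp
  have T\<psi>: "T \<psi> y = T (T \<phi>) y + (- \<kappa>) * T \<phi> y" for y
    unfolding \<psi>_def by (rule Lt_add_scaled[OF T\<phi> \<phi>])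
  have "AE y in lborel. y \<in> I \<longrightarrow> T \<psi> y = (- \<kappa>) * \<psi> y"
    using ev by eventually_elim (simp add: T\<psi> \<psi>_def algebra_simps power2_eq_square)
  moreover have abs_\<kappa>: "\<bar>- \<kappa>\<bar> = \<kappa>" "\<bar>\<kappa>\<bar> = \<kappa>" using eigenvalue_pos by auto
  ultimately have "AE y in lborel. y \<in> I \<longrightarrow> \<psi> y = 0"
    using eigenvector_orth_e1_eq_0[OF \<psi> \<psi>_orth] by blast
  then have "AE y in lborel. y \<in> I \<longrightarrow> T \<phi> y = \<kappa> * \<phi> y"
    by eventually_elim (simp add: \<psi>_def)
  from eigenvector_orth_e1_eq_0[OF \<phi> orth this abs_\<kappa>(2)] show ?thesis .
qed

end

context weighted_density
begin

lemma nsq_tendsto_0_if_le: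
  assumes "\<And>n. nsq (u n) \<le> C * e n" and "e \<longlonglongrightarrow> 0"
  shows "(\<lambda>n. nsq (u n)) \<longlonglongrightarrow> 0"
proof (rule Lim_null_comparison)
  show "\<forall>\<^sub>F n in sequentially. norm (nsq (u n)) \<le> C * e n"
    using assms(1) nsq_nonneg by simp
  show "(\<lambda>n. C * e n) \<longlonglongrightarrow> 0"
    using tendsto_mult_right_zero[OF assms(2)] by (simp add: mult.commute)
qed

lemma nsq_add_scaled_tendsto_0:
  assumes "\<And>n. L2q (u n)" "\<And>n. L2q (v n)"
    and "(\<lambda>n. nsq (u n)) \<longlonglongrightarrow> 0" "(\<lambda>n. nsq (v n)) \<longlonglongrightarrow> 0"
  shows "(\<lambda>n. nsq (\<lambda>y. u n y + c * v n y)) \<longlonglongrightarrow> 0"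
proof (rule nsq_tendsto_0_if_le)
  show "nsq (\<lambda>y. u n y + c * v n y) \<le> 2 * (nsq (u n) + c\<^sup>2 * nsq (v n))" for n
    using nsq_add_le[OF assms(1)[of n] L2q_scale[OF assms(2)[of n]]] nsq_scale
    by simp
  show "(\<lambda>n. nsq (u n) + c\<^sup>2 * nsq (v n)) \<longlonglongrightarrow> 0"
    using tendsto_add[OF assms(3) tendsto_mult[OF tendsto_const assms(4)]] by simp
qed

lemma inner_pw_tendsto_0:
  assumes "\<And>n. L2q (u n)" "L2q h" "(\<lambda>n. nsq (u n)) \<longlonglongrightarrow> 0"
  shows "(\<lambda>n. inner_pw (u n) h) \<longlonglongrightarrow> 0"
proof (rule LIMSEQ_zero_if_sq_le)
  show "(inner_pw (u n) h)\<^sup>2 \<le> nsq h * nsq (u n)" for n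
    using inner_pw_Cauchy_Schwarz[OF assms(1,2)] by (simp add: mult.commute)
qed (use assms(3) nsq_nonneg in auto)

lemma nsq_tendsto_if_nsq_diff_tendsto_0:
  assumes u: "\<And>n. L2q (u n)" and \<phi>: "L2q \<phi>" and bounded: "\<And>n. nsq (u n) \<le> B"
    and conv: "(\<lambda>n. nsq (\<lambda>y. u n y + (-1) * \<phi> y)) \<longlonglongrightarrow> 0"
  shows "(\<lambda>n. nsq (u n)) \<longlonglongrightarrow> nsq \<phi>"
proof -
  define d where "d n y = u n y + (-1) * \<phi> y" for n y
  define s where "s n y = u n y + 1 * \<phi> y" for n y
  have d: "L2q (d n)" and s: "L2q (s n)" for n
    unfolding d_def s_def by (rule L2q_add_scaled[OF u \<phi>])+
  have "inner_pw (d n) (s n) = nsq (u n) - nsq \<phi>" for n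
  proof -
    have "inner_pw (d n) (s n) = inner_pw (s n) (u n) - inner_pw (s n) \<phi>"
      using inner_pw_add_scaled[OF u[of n] \<phi> s[of n], of "-1"] inner_pw_sym[of _ "s n"]
      unfolding d_def by simp
    also have "\<dots> = nsq (u n) - nsq \<phi>"
      using inner_pw_add_scaled[OF u[of n] \<phi> u[of n], of 1] inner_pw_add_scaled[OF u[of n] \<phi> \<phi>, of 1]
        inner_pw_sym[of \<phi> "u n"]
      unfolding s_def by simp
    finally show ?thesis .
  qed
  moreover have "(\<lambda>n. inner_pw (d n) (s n)) \<longlonglongrightarrow> 0"
  proof (rule LIMSEQ_zero_if_sq_le)
    show "(inner_pw (d n) (s n))\<^sup>2 \<le> (2 * B + 2 * nsq \<phi>) * nsq (d n)" for n
    proof -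
      have "nsq (s n) \<le> 2 * B + 2 * nsq \<phi>"
        using nsq_add_le[OF u[of n] \<phi>] bounded[of n] unfolding s_def by simp
      then have "nsq (d n) * nsq (s n) \<le> nsq (d n) * (2 * B + 2 * nsq \<phi>)"
        using nsq_nonneg[of "d n"] by (rule mult_left_mono)
      with inner_pw_Cauchy_Schwarz[OF d s, of n n] show ?thesis by (simp add: mult.commute)
    qed
    show "0 \<le> 2 * B + 2 * nsq \<phi>"
      using order_trans[OF nsq_nonneg bounded[of 0]] nsq_nonneg[of \<phi>] by simp
  qed (use conv in \<open>simp add: d_def[abs_def]\<close>)
  ultimately have "(\<lambda>n. nsq (u n) - nsq \<phi>) \<longlonglongrightarrow> 0" by simp
  then show ?thesis by (simp add: LIM_zero_iff)
qed

end

context positive_eigenfunction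
begin

lemma nsq_Lt_tendsto_0:
  assumes "\<And>n. L2q (u n)" "(\<lambda>n. nsq (u n)) \<longlonglongrightarrow> 0"
  shows "(\<lambda>n. nsq (T (u n))) \<longlonglongrightarrow> 0"
  using nsq_tendsto_0_if_le[OF nsq_Lt_le[OF assms(1)] assms(2)] .

lemma maximizing_sequence_approx_eigen:
  assumes G: "\<And>n. L2q (G n)" and G1: "\<And>n. nsq (G n) \<le> 1"
    and lim: "(\<lambda>n. nsq (T (G n))) \<longlonglongrightarrow> \<kappa>\<^sup>2"
  shows "(\<lambda>n. nsq (G n)) \<longlonglongrightarrow> 1"
    and "(\<lambda>n. nsq (\<lambda>y. T (T (G n)) y + (- \<kappa>\<^sup>2) * G n y)) \<longlonglongrightarrow> 0"
proof -
  have \<kappa>2: "\<kappa>\<^sup>2 > 0" using eigenvalue_pos by simp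
  have TG: "nsq (T (G n)) \<le> \<kappa>\<^sup>2 * nsq (G n)" for n using nsq_Lt_le[OF G] .
  show "(\<lambda>n. nsq (G n)) \<longlonglongrightarrow> 1"
  proof (rule tendsto_sandwich[of "\<lambda>n. nsq (T (G n)) / \<kappa>\<^sup>2" _ _ "\<lambda>_. 1"])
    show "\<forall>\<^sub>F n in sequentially. nsq (T (G n)) / \<kappa>\<^sup>2 \<le> nsq (G n)"
      using TG \<kappa>2 by (simp add: pos_divide_le_eq mult.commute)
    show "(\<lambda>n. nsq (T (G n)) / \<kappa>\<^sup>2) \<longlonglongrightarrow> 1"
      using tendsto_divide[OF lim tendsto_const[of "\<kappa>\<^sup>2"]] \<kappa>2 by simp
  qed (use G1 in auto)
  show "(\<lambda>n. nsq (\<lambda>y. T (T (G n)) y + (- \<kappa>\<^sup>2) * G n y)) \<longlonglongrightarrow> 0"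
  proof (rule nsq_tendsto_0_if_le[where C=1])
    fix n
    have TTG: "L2q (T (T (G n)))" using Lt_L2q[OF Lt_L2q[OF G]] .
    have "inner_pw (T (T (G n))) (G n) = nsq (T (G n))"
      using inner_pw_Lt_sym[OF Lt_L2q[OF G] G] by simp
    moreover have "nsq (T (T (G n))) \<le> \<kappa>\<^sup>2 * nsq (T (G n))" by (rule nsq_Lt_le[OF Lt_L2q[OF G]])
    moreover have "(\<kappa>\<^sup>2)\<^sup>2 * nsq (G n) \<le> (\<kappa>\<^sup>2)\<^sup>2" using G1[of n] by (simp add: mult_left_le)
    ultimately show "nsq (\<lambda>y. T (T (G n)) y + (- \<kappa>\<^sup>2) * G n y) \<le> 1 * ((\<kappa>\<^sup>2)\<^sup>2 - \<kappa>\<^sup>2 * nsq (T (G n)))"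
      unfolding nsq_add_scaled[OF TTG G] by (simp add: power2_eq_square)
  next
    show "(\<lambda>n. (\<kappa>\<^sup>2)\<^sup>2 - \<kappa>\<^sup>2 * nsq (T (G n))) \<longlonglongrightarrow> 0"
      using tendsto_diff[OF tendsto_const[of "(\<kappa>\<^sup>2)\<^sup>2"] tendsto_mult[OF tendsto_const[of "\<kappa>\<^sup>2"] lim]]
      by (simp add: power2_eq_square)
  qed
qed

lemma maximizing_sequence_converges:
  assumes G: "\<And>n. L2q (G n)" and G1: "\<And>n. nsq (G n) \<le> 1"
    and lim: "(\<lambda>n. nsq (T (G n))) \<longlonglongrightarrow> \<kappa>\<^sup>2"
    and g: "L2q g" and conv: "(\<lambda>n. nsq (\<lambda>y. T (G n) y + (-1) * g y)) \<longlonglongrightarrow> 0"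
  shows "(\<lambda>n. nsq (\<lambda>y. G n y + (-1) * ((1 / \<kappa>\<^sup>2) * T g y))) \<longlonglongrightarrow> 0"
proof (rule nsq_tendsto_0_if_le)
  have \<kappa>2: "\<kappa>\<^sup>2 > 0" using eigenvalue_pos by simp
  define W where "W n = T (\<lambda>z. T (G n) z + (-1) * g z)" for n
  define D where "D n y = T (T (G n)) y + (- \<kappa>\<^sup>2) * G n y" for n y
  have TGg: "L2q (\<lambda>z. T (G n) z + (-1) * g z)" for n by (rule L2q_add_scaled[OF Lt_L2q[OF G] g])
  have W: "L2q (W n)" for n unfolding W_def by (rule Lt_L2q[OF TGg])
  have D: "L2q (D n)" for n unfolding D_def by (rule L2q_add_scaled[OF Lt_L2q[OF Lt_L2q[OF G]] G])
  have "(\<lambda>n. nsq (W n)) \<longlonglongrightarrow> 0"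
    unfolding W_def by (rule nsq_Lt_tendsto_0[OF TGg conv])
  moreover have "(\<lambda>n. nsq (D n)) \<longlonglongrightarrow> 0"
    using maximizing_sequence_approx_eigen(2)[OF G G1 lim] by (simp add: D_def[abs_def])
  ultimately show "(\<lambda>n. nsq (\<lambda>y. W n y + (-1) * D n y)) \<longlonglongrightarrow> 0"
    by (rule nsq_add_scaled_tendsto_0[OF W D])
  fix n
  (* \<kappa>\<^sup>2 G n - T g = T (T (G n) - g) - (T (T (G n)) - \<kappa>\<^sup>2 G n), and both terms on the right vanish *)
  have "W n y = T (T (G n)) y + (-1) * T g y" for y
    unfolding W_def by (rule Lt_add_scaled[OF Lt_L2q[OF G] g])
  then have "(\<lambda>y. W n y + (-1) * D n y) = (\<lambda>y. \<kappa>\<^sup>2 * (G n y + (-1) * ((1 / \<kappa>\<^sup>2) * T g y)))"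
    using \<kappa>2 by (simp add: D_def fun_eq_iff algebra_simps)
  then have "nsq (\<lambda>y. W n y + (-1) * D n y) = (\<kappa>\<^sup>2)\<^sup>2 * nsq (\<lambda>y. G n y + (-1) * ((1 / \<kappa>\<^sup>2) * T g y))"
    by (simp add: nsq_scale)
  then show "nsq (\<lambda>y. G n y + (-1) * ((1 / \<kappa>\<^sup>2) * T g y)) \<le> (1 / (\<kappa>\<^sup>2)\<^sup>2) * nsq (\<lambda>y. W n y + (-1) * D n y)"
    using \<kappa>2 by simp
qed

lemma sq_eigen_if_approx_limit:
  assumes G: "\<And>n. L2q (G n)" and \<phi>: "L2q \<phi>"
    and approx: "(\<lambda>n. nsq (\<lambda>y. T (T (G n)) y + (- \<kappa>\<^sup>2) * G n y)) \<longlonglongrightarrow> 0"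
    and conv: "(\<lambda>n. nsq (\<lambda>y. G n y + (-1) * \<phi> y)) \<longlonglongrightarrow> 0"
  shows "AE y in lborel. y \<in> I \<longrightarrow> T (T \<phi>) y = \<kappa>\<^sup>2 * \<phi> y"
proof -
  define E where "E n y = G n y + (-1) * \<phi> y" for n y
  define D where "D n y = T (T (G n)) y + (- \<kappa>\<^sup>2) * G n y" for n y
  define Z where "Z y = T (T \<phi>) y + (- \<kappa>\<^sup>2) * \<phi> y" for y
  have E: "L2q (E n)" for n unfolding E_def by (rule L2q_add_scaled[OF G \<phi>])
  have D: "L2q (D n)" for n unfolding D_def by (rule L2q_add_scaled[OF Lt_L2q[OF Lt_L2q[OF G]] G])
  have Z: "L2q Z" unfolding Z_def by (rule L2q_add_scaled[OF Lt_L2q[OF Lt_L2q[OF \<phi>]] \<phi>])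
  have E0: "(\<lambda>n. nsq (E n)) \<longlonglongrightarrow> 0" using conv by (simp add: E_def[abs_def])
  have "T (E n) = (\<lambda>y. T (G n) y + (-1) * T \<phi> y)" for n
    unfolding E_def by (rule ext, rule Lt_add_scaled[OF G \<phi>])
  then have TTE: "T (T (E n)) y = T (T (G n)) y + (-1) * T (T \<phi>) y" for n y
    using Lt_add_scaled[OF Lt_L2q[OF G] Lt_L2q[OF \<phi>], where c="-1"] by simp
  have "(\<lambda>n. nsq (\<lambda>y. (D n y + \<kappa>\<^sup>2 * E n y) + (-1) * T (T (E n)) y)) \<longlonglongrightarrow> 0"
  proof (rule nsq_add_scaled_tendsto_0)
    show "L2q (\<lambda>y. D n y + \<kappa>\<^sup>2 * E n y)" for n by (rule L2q_add_scaled[OF D E])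
    show "L2q (T (T (E n)))" for n by (rule Lt_L2q[OF Lt_L2q[OF E]])
    show "(\<lambda>n. nsq (\<lambda>y. D n y + \<kappa>\<^sup>2 * E n y)) \<longlonglongrightarrow> 0"
      using nsq_add_scaled_tendsto_0[OF D E _ E0] approx by (simp add: D_def[abs_def])
    show "(\<lambda>n. nsq (T (T (E n)))) \<longlonglongrightarrow> 0"
      by (rule nsq_Lt_tendsto_0[OF Lt_L2q[OF E] nsq_Lt_tendsto_0[OF E E0]])
  qed
  moreover have "(\<lambda>y. (D n y + \<kappa>\<^sup>2 * E n y) + (-1) * T (T (E n)) y) = Z" for n
    by (simp add: fun_eq_iff TTE D_def E_def Z_def algebra_simps)
  ultimately have "nsq Z = 0" by (simp add: LIMSEQ_const_iff)
  then have "AE y in lborel. y \<in> I \<longrightarrow> Z y = 0" using nsq_eq_0_iff[OF Z] by simp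
  then show ?thesis by eventually_elim (simp add: Z_def)
qed

lemma no_orth_maximizing_sequence:
  assumes G: "\<And>n. L2q (G n)" and G1: "\<And>n. nsq (G n) \<le> 1" and orth: "\<And>n. inner_pw (G n) e1 = 0"
    and lim: "(\<lambda>n. nsq (T (G n))) \<longlonglongrightarrow> \<kappa>\<^sup>2"
    and g: "L2q g" and conv: "(\<lambda>n. nsq (\<lambda>y. T (G n) y + (-1) * g y)) \<longlonglongrightarrow> 0"
  shows False
proof -
  define \<phi> where "\<phi> y = (1 / \<kappa>\<^sup>2) * T g y" for y
  have \<phi>: "L2q \<phi>" unfolding \<phi>_def by (rule L2q_scale[OF Lt_L2q[OF g]])
  have G\<phi>: "(\<lambda>n. nsq (\<lambda>y. G n y + (-1) * \<phi> y)) \<longlonglongrightarrow> 0"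
    unfolding \<phi>_def by (rule maximizing_sequence_converges[OF G G1 lim g conv])
  have "inner_pw (\<lambda>y. G n y + (-1) * \<phi> y) e1 = - inner_pw \<phi> e1" for n
    using inner_pw_add_scaled[OF G \<phi> e1_L2q, where c="-1"] orth by simp
  then have "(\<lambda>n. - inner_pw \<phi> e1) \<longlonglongrightarrow> 0"
    using inner_pw_tendsto_0[OF L2q_add_scaled[OF G \<phi>] e1_L2q G\<phi>] by simp
  then have \<phi>_orth: "inner_pw \<phi> e1 = 0" by (simp add: LIMSEQ_const_iff)
  have "(\<lambda>n. nsq (G n)) \<longlonglongrightarrow> nsq \<phi>" by (rule nsq_tendsto_if_nsq_diff_tendsto_0[OF G \<phi> G1 G\<phi>])
  then have "nsq \<phi> = 1" using maximizing_sequence_approx_eigen(1)[OF G G1 lim] LIMSEQ_unique by blast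
  moreover have "AE y in lborel. y \<in> I \<longrightarrow> \<phi> y = 0"
    using sq_eigenvector_orth_e1_eq_0[OF \<phi> \<phi>_orth
        sq_eigen_if_approx_limit[OF G \<phi> maximizing_sequence_approx_eigen(2)[OF G G1 lim] G\<phi>]] .
  ultimately show False using nsq_eq_0_iff[OF \<phi>] by simp
qed

end

context positive_eigenfunction
begin

lemma L2q_Lt_power: "L2q f \<Longrightarrow> L2q ((T ^^ n) f)"
  by (induction n) (auto intro: Lt_L2q)

lemma inner_pw_Lt_power_e1: "L2q f \<Longrightarrow> inner_pw ((T ^^ n) f) e1 = \<kappa> ^ n * inner_pw f e1"
  by (induction n) (simp_all add: inner_pw_Lt_e1 L2q_Lt_power)

lemma inner_pw_kw_e1_pos: "inner_pw h0 e1 > 0"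
proof -
  have "AE z in lborel. z \<in> I \<longrightarrow> K x0 z * e1 z > 0"
    using e1_pos by eventually_elim (use x0_in Kker_pos in auto)
  from integral_indicator_pos_AE[OF _ emeasure_I_pos integrable_Kker_mult[OF e1_L2q] this]
  have "T e1 x0 > 0" unfolding Lt_eq using p_x0 w_x0 by simp
  then show ?thesis using Lt_at_point[OF e1_L2q] by simp
qed

end

locale compact_positive_eigenfunction = positive_eigenfunction +
  assumes compact: "Lt_compact a b p w"
begin

lemma Lt_E2: "f \<in> E2 a b p w \<Longrightarrow> T f \<in> E2 a b p w"
  using compact unfolding Lt_compact_def by blast

lemma Lt_power_E2: "f \<in> E2 a b p w \<Longrightarrow> (T ^^ n) f \<in> E2 a b p w"
  by (induction n) (auto intro: Lt_E2)

definition orth_ball :: "(real \<Rightarrow> real) set" where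
  "orth_ball = {f \<in> E2 a b p w. inner_pw f e1 = 0 \<and> nsq f \<le> 1}"

definition orth_gain :: real where
  "orth_gain = (SUP f \<in> orth_ball. nsq (T f))"

lemma nsq_Lt_le_on_orth_ball: "f \<in> orth_ball \<Longrightarrow> nsq (T f) \<le> \<kappa>\<^sup>2"
  unfolding orth_ball_def
  using nsq_Lt_le[OF E2_imp_L2q] mult_left_le[of "nsq f" "\<kappa>\<^sup>2"] by (force intro: order_trans)

lemma bdd_above_orth_ball: "bdd_above ((\<lambda>f. nsq (T f)) ` orth_ball)"
  by (rule bdd_aboveI2) (rule nsq_Lt_le_on_orth_ball)

lemma zero_in_orth_ball: "(\<lambda>_. 0) \<in> orth_ball"
  unfolding orth_ball_def using E2_zero[OF e1_E2] by (simp add: inner_pw_def)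

lemma orth_gain_nonneg: "0 \<le> orth_gain"
proof -
  have "nsq (T (\<lambda>_. 0)) = 0" by (simp add: Lt_eq inner_pw_def)
  then show ?thesis
    unfolding orth_gain_def using cSUP_upper[OF zero_in_orth_ball bdd_above_orth_ball] by simp
qed

lemma nsq_Lt_le_orth_gain:
  assumes r: "r \<in> E2 a b p w" and orth: "inner_pw r e1 = 0"
  shows "nsq (T r) \<le> orth_gain * nsq r"
proof (cases "nsq r = 0")
  case True
  have "AE y in lborel. y \<in> I \<longrightarrow> r y = 0"
    using True nsq_eq_0_iff[OF E2_imp_L2q[OF r]] by simp
  then have "T r = (\<lambda>_. 0)"
    using Lt_cong[of r "\<lambda>_. 0"] L2_meas[OF E2_imp_L2q[OF r]] by (auto simp: Lt_eq)
  then show ?thesis using True by (simp add: inner_pw_def)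
next
  case False
  then have pos: "nsq r > 0" using nsq_nonneg[of r] by simp
  define c where "c = 1 / sqrt (nsq r)"
  have c2: "c\<^sup>2 * nsq r = 1" unfolding c_def using pos by (simp add: power_divide)
  have "nsq (\<lambda>y. c * r y) = 1" using c2 by (simp only: nsq_scale)
  moreover have "inner_pw (\<lambda>y. c * r y) e1 = 0" using orth by (simp add: inner_pw_scale)
  ultimately have "(\<lambda>y. c * r y) \<in> orth_ball"
    unfolding orth_ball_def using E2_scale[OF r] by simp
  then have "nsq (T (\<lambda>y. c * r y)) \<le> orth_gain"
    unfolding orth_gain_def by (rule cSUP_upper[OF _ bdd_above_orth_ball])
  moreover have "T (\<lambda>y. c * r y) = (\<lambda>y. c * T r y)" by (rule ext) (rule Lt_scale)
  ultimately have "c\<^sup>2 * nsq (T r) \<le> orth_gain * (c\<^sup>2 * nsq r)"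
    using c2 by (simp add: nsq_scale)
  then have "c\<^sup>2 * nsq (T r) \<le> c\<^sup>2 * (orth_gain * nsq r)" by (simp add: ac_simps)
  moreover have "c\<^sup>2 > 0" using c2 by (cases "c = 0") auto
  ultimately show ?thesis by (simp add: mult_le_cancel_left_pos)
qed

lemma orth_gain_less: "orth_gain < \<kappa>\<^sup>2"
proof (rule ccontr)
  assume "\<not> orth_gain < \<kappa>\<^sup>2"
  then have "\<kappa>\<^sup>2 \<le> orth_gain" by simp
  have "\<exists>f \<in> orth_ball. \<kappa>\<^sup>2 - 1 / (real n + 1) < nsq (T f)" for n
  proof -
    have "0 < 1 / (real n + 1)" by simp
    with \<open>\<kappa>\<^sup>2 \<le> orth_gain\<close> have "\<kappa>\<^sup>2 - 1 / (real n + 1) < orth_gain" by linarith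
    then show ?thesis
      unfolding orth_gain_def using less_cSUP_iff[OF _ bdd_above_orth_ball] zero_in_orth_ball by blast
  qed
  then obtain F where F: "\<And>n. F n \<in> orth_ball" and F_lo: "\<And>n. \<kappa>\<^sup>2 - 1 / (real n + 1) < nsq (T (F n))"
    by metis
  have "\<forall>n. F n \<in> E2 a b p w" "\<exists>B. \<forall>n. normsq a b p w (F n) \<le> B"
    using F unfolding orth_ball_def normsq_eq_nsq by auto
  then obtain s g where s: "strict_mono s" and g: "g \<in> E2 a b p w"
    and conv: "(\<lambda>n. normsq a b p w (\<lambda>y. T (F (s n)) y - g y)) \<longlonglongrightarrow> 0"
    using compact unfolding Lt_compact_def by blast
  define G where "G n = F (s n)" for n
  have G: "G n \<in> orth_ball" for n unfolding G_def using F .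
  have "(\<lambda>n. 1 / (real (s n) + 1)) \<longlonglongrightarrow> 0"
    using LIMSEQ_subseq_LIMSEQ[OF LIMSEQ_inverse_real_of_nat s] by (simp add: comp_def inverse_eq_divide add.commute)
  have "(\<lambda>n. nsq (T (G n))) \<longlonglongrightarrow> \<kappa>\<^sup>2"
  proof (rule tendsto_sandwich[of "\<lambda>n. \<kappa>\<^sup>2 - 1 / (real (s n) + 1)" _ _ "\<lambda>_. \<kappa>\<^sup>2", rotated 2])
    show "(\<lambda>n. \<kappa>\<^sup>2 - 1 / (real (s n) + 1)) \<longlonglongrightarrow> \<kappa>\<^sup>2"
      using tendsto_diff[OF tendsto_const[of "\<kappa>\<^sup>2"] \<open>(\<lambda>n. 1 / (real (s n) + 1)) \<longlonglongrightarrow> 0\<close>] by simp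
  qed (use F_lo G nsq_Lt_le_on_orth_ball in \<open>auto simp: G_def less_imp_le\<close>)
  moreover have "(\<lambda>n. nsq (\<lambda>y. T (G n) y + (-1) * g y)) \<longlonglongrightarrow> 0"
    using conv unfolding G_def normsq_eq_nsq by simp
  ultimately show False
    using no_orth_maximizing_sequence[OF _ _ _ _ E2_imp_L2q[OF g]] G
    unfolding orth_ball_def by (auto dest: E2_imp_L2q)
qed

end

context compact_positive_eigenfunction
begin

lemma nsq_residual_le:
  assumes g0: "g0 \<in> E2 a b p w"
  defines "r n \<equiv> \<lambda>y. (T ^^ n) g0 y + (- (\<kappa> ^ n * inner_pw g0 e1)) * e1 y"
  shows "nsq (r n) \<le> orth_gain ^ n * nsq (r 0)"
proof (induction n)
  case (Suc n)
  have g0_L2q: "L2q g0" using E2_imp_L2q[OF g0] .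
  have r: "r n \<in> E2 a b p w" for n
    unfolding r_def by (rule E2_add_scaled[OF Lt_power_E2[OF g0] e1_E2])
  have [measurable]: "r n \<in> borel_measurable borel" "T (r n) \<in> borel_measurable borel" for n
    using L2_meas[OF E2_imp_L2q[OF r]] Lt_measurable[OF E2_imp_L2q[OF r]] .
  have "inner_pw (r n) e1 = 0"
    unfolding r_def
    using inner_pw_add_scaled[OF L2q_Lt_power[OF g0_L2q] e1_L2q e1_L2q, where c="- (\<kappa> ^ n * inner_pw g0 e1)"]
      inner_pw_Lt_power_e1[OF g0_L2q]
      nsq_e1
    by simp
  have step: "r (Suc n) y = T (r n) y" if "T e1 y = \<kappa> * e1 y" for y
  proof -
    have "T (r n) y = T ((T ^^ n) g0) y + (- (\<kappa> ^ n * inner_pw g0 e1)) * T e1 y"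
      unfolding r_def by (rule Lt_add_scaled[OF L2q_Lt_power[OF g0_L2q] e1_L2q])
    also have "\<dots> = r (Suc n) y" using that by (simp add: r_def algebra_simps)
    finally show ?thesis by simp
  qed
  have shift: "AE y in lborel. y \<in> I \<longrightarrow> r (Suc n) y = T (r n) y"
    using eigen by eventually_elim (blast intro: step)
  have "nsq (r (Suc n)) = inner_pw (T (r n)) (r (Suc n))"
    by (rule inner_pw_cong[OF shift]) measurable
  also have "\<dots> = inner_pw (r (Suc n)) (T (r n))" by (rule inner_pw_sym)
  also have "\<dots> = nsq (T (r n))"
    by (rule inner_pw_cong[OF shift]) measurable
  also have "\<dots> \<le> orth_gain * nsq (r n)"
    by (rule nsq_Lt_le_orth_gain[OF r \<open>inner_pw (r n) e1 = 0\<close>])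
  also have "\<dots> \<le> orth_gain * (orth_gain ^ n * nsq (r 0))"
    using Suc orth_gain_nonneg by (rule mult_left_mono)
  finally show ?case by simp
qed simp

lemma Lt_power_at_point_geometric:
  assumes g0: "g0 \<in> E2 a b p w"
  shows "(\<lambda>n. (T ^^ Suc n) g0 x0 / \<kappa> ^ n) \<longlonglongrightarrow> inner_pw g0 e1 * inner_pw h0 e1"
proof -
  define c where "c = inner_pw g0 e1"
  define r where "r n y = (T ^^ n) g0 y + (- (\<kappa> ^ n * c)) * e1 y" for n y
  have r: "L2q (r n)" for n
    unfolding r_def by (rule L2q_add_scaled[OF L2q_Lt_power[OF E2_imp_L2q[OF g0]] e1_L2q])
  have \<kappa>: "\<kappa> > 0" using eigenvalue_pos .
  have "(T ^^ Suc n) g0 x0 = inner_pw (r n) h0 + \<kappa> ^ n * (c * inner_pw h0 e1)" for n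
  proof -
    have "(T ^^ n) g0 = (\<lambda>y. r n y + (\<kappa> ^ n * c) * e1 y)" by (simp add: r_def fun_eq_iff)
    then have "(T ^^ Suc n) g0 x0 = inner_pw (\<lambda>y. r n y + (\<kappa> ^ n * c) * e1 y) h0"
      using Lt_at_point[OF L2q_Lt_power[OF E2_imp_L2q[OF g0]], of n] inner_pw_sym by simp
    then show ?thesis using inner_pw_add_scaled[OF r e1_L2q kw_L2] inner_pw_sym[of e1] by simp
  qed
  then have eq: "(T ^^ Suc n) g0 x0 / \<kappa> ^ n = inner_pw (r n) h0 / \<kappa> ^ n + c * inner_pw h0 e1" for n
    using \<kappa> by (simp add: field_simps)
  have "(\<lambda>n. inner_pw (r n) h0 / \<kappa> ^ n) \<longlonglongrightarrow> 0"
  proof (rule LIMSEQ_zero_if_sq_le)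
    show "(inner_pw (r n) h0 / \<kappa> ^ n)\<^sup>2 \<le> (nsq (r 0) * nsq h0) * (orth_gain / \<kappa>\<^sup>2) ^ n" for n
    proof -
      have "(inner_pw (r n) h0)\<^sup>2 \<le> nsq (r n) * nsq h0" by (rule inner_pw_Cauchy_Schwarz[OF r kw_L2])
      also have "\<dots> \<le> orth_gain ^ n * nsq (r 0) * nsq h0"
        using nsq_residual_le[OF g0, of n] nsq_nonneg[of h0]
        unfolding r_def c_def by (intro mult_right_mono) auto
      finally show ?thesis
        using \<kappa> by (simp add: power_divide power_mult_distrib divide_right_mono power_mult[symmetric] ac_simps)
    qed
    show "(\<lambda>n. (orth_gain / \<kappa>\<^sup>2) ^ n) \<longlonglongrightarrow> 0"
      using orth_gain_nonneg orth_gain_less \<kappa> by (intro LIMSEQ_power_zero) simp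
    show "0 \<le> nsq (r 0) * nsq h0" using nsq_nonneg by simp
  qed
  then show ?thesis
    unfolding eq c_def using tendsto_add[OF _ tendsto_const] by fastforce
qed

lemma Lt_power_ratio_at_point:
  assumes "g0 \<in> E2 a b p w" and "inner_pw g0 e1 \<noteq> 0"
  shows "(\<lambda>n. (T ^^ Suc n) g0 x0 / (T ^^ n) g0 x0) \<longlonglongrightarrow> \<kappa>"
proof -
  have "(\<lambda>n. (T ^^ Suc (Suc n)) g0 x0 / (T ^^ Suc n) g0 x0) \<longlonglongrightarrow> \<kappa>"
    using LIMSEQ_ratio_if_geometric[OF Lt_power_at_point_geometric[OF assms(1)]]
      assms(2) inner_pw_kw_e1_pos eigenvalue_pos
    by simp
  then show ?thesis by (rule LIMSEQ_imp_Suc)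
qed

end

theorem theorem3p8:
  fixes a b :: ereal and p w e1 g0 :: "real \<Rightarrow> real" and x :: real
  assumes "a < b"
    and "prob_density a b p"
    and "weight a b p w"
    and "H1 a b p w" and "H2 a b p w"
    and "Lt_compact a b p w"
    and "x \<in> Ioi a b"
    and "p x > 0" and "w x > 0"
    and "L2 a b (\<lambda>y. p y * w y) (kw a b p w x)"
    and "e1 \<in> E2 a b p w"
    and "AE y in lborel. y \<in> Ioi a b \<longrightarrow> Lt a b p w e1 y = Cpw a b p w * e1 y"
    and "AE y in lborel. y \<in> Ioi a b \<longrightarrow> e1 y > 0"
    and "normsq a b p w e1 = 1"
    and "g0 \<in> E2 a b p w"
    and "(LINT y:Ioi a b|lborel. g0 y * e1 y * w y * p y) \<noteq> 0"
  shows "(\<lambda>n. (Lt a b p w ^^ Suc n) g0 x / (Lt a b p w ^^ n) g0 x) \<longlonglongrightarrow> Cpw a b p w"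
proof -
  interpret compact_positive_eigenfunction a b p w x e1 "Cpw a b p w"
    by unfold_locales (use assms in auto)
  have "inner_pw g0 e1 = (LINT y:Ioi a b|lborel. g0 y * e1 y * w y * p y)"
    unfolding inner_pw_def set_lebesgue_integral_real by (simp add: ac_simps)
  with assms(16) have "inner_pw g0 e1 \<noteq> 0" by simp
  with assms(15) show ?thesis by (rule Lt_power_ratio_at_point)
qed

end
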